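(* Define $\varphi_0:[-\pi,\pi]\to\mathbb{R}$ by $\varphi_0(x)=1+\left(1+\frac1\pi\right)x$ for $-\pi\le x<0$ and $\varphi_0(x)=1+\left(1-\frac1\pi\right)x$ for $0\le x\le\pi$, extend it to $\varphi:\mathbb{R}\to\mathbb{R}$ by $\varphi(x+2k\pi)=\varphi_0(x)+2k\pi$ for $x\in[-\pi,\pi]$, $k\in\mathbb{Z}$, and set $F(e^{ix})=e^{i\varphi(x)}$. Then: (A1) $t\mapsto F(e^{it})$ is absolutely continuous and $\dot F\in L^\infty(0,2\pi)$, where $\dot F(e^{it})=\frac{d}{dt}F(e^{it})$; (A2) $w=P[F]$ is a harmonic mapping of $\mathbb{D}$ into $\mathbb{D}$ which is not quasiregular; (A3) $w_z\notin L^\infty(\mathbb{D})$.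
   Context: $\mathbb{D}$ is the open unit disk. $P[F](re^{i\theta})=\int_0^{2\pi}P_r(t-\theta)F(e^{it})\,dt$ with $P_r(t-\theta)=\frac{1}{2\pi}\frac{1-r^2}{1-2r\cos(t-\theta)+r^2}$. $w_z=\frac12(w_x-iw_y)$, $w_{\bar z}=\frac12(w_x+iw_y)$. A harmonic mapping $w$ of $\mathbb{D}$ is quasiregular if there is a constant $K\ge1$ with $(|w_z|+|w_{\bar z}|)^2\le K(|w_z|^2-|w_{\bar z}|^2)$ in $\mathbb{D}$. $L^\infty(\mathbb{D})$ is the space of essentially bounded functions on $\mathbb{D}$. *)

theory Defs
  imports "HOL-Analysis.Analysis"
begin

definition phi0 :: "real \<Rightarrow> real" where
  "phi0 x = (if x < 0 then 1 + (1 + 1/pi) * x else 1 + (1 - 1/pi) * x)"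

definition phi :: "real \<Rightarrow> real" where
  "phi x = (let k = real_of_int \<lfloor>(x + pi) / (2*pi)\<rfloor> in phi0 (x - 2*k*pi) + 2*k*pi)"

definition Fb :: "complex \<Rightarrow> complex" where
  "Fb z = exp (\<i> * complex_of_real (phi (Arg z)))"

definition poisson_kernel :: "real \<Rightarrow> real \<Rightarrow> real" where
  "poisson_kernel r s = (1 / (2*pi)) * ((1 - r^2) / (1 - 2*r*cos s + r^2))"

definition poisson_integral :: "(complex \<Rightarrow> complex) \<Rightarrow> complex \<Rightarrow> complex" where
  "poisson_integral F z =
     integral {0..2*pi} (\<lambda>t. complex_of_real (poisson_kernel (cmod z) (t - Arg z)) * F (exp (\<i> * complex_of_real t)))"

definition abs_continuous_on :: "real set \<Rightarrow> (real \<Rightarrow> 'b::real_normed_vector) \<Rightarrow> bool" where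
  "abs_continuous_on S f \<longleftrightarrow>
     (\<forall>\<epsilon>>0. \<exists>\<delta>>0. \<forall>(n::nat) (a::nat \<Rightarrow> real) (b::nat \<Rightarrow> real).
        (\<forall>i<n. a i \<le> b i \<and> {a i..b i} \<subseteq> S) \<and>
        (\<forall>i<n. \<forall>j<n. i \<noteq> j \<longrightarrow> b i \<le> a j \<or> b j \<le> a i) \<and>
        (\<Sum>i<n. b i - a i) < \<delta>
        \<longrightarrow> (\<Sum>i<n. norm (f (b i) - f (a i))) < \<epsilon>)"

definition in_Linf :: "'a::euclidean_space set \<Rightarrow> ('a \<Rightarrow> 'b::{real_normed_vector, second_countable_topology}) \<Rightarrow> bool" where
  "in_Linf S g \<longleftrightarrow> g \<in> borel_measurable (lebesgue_on S) \<and> (\<exists>M. AE x in lebesgue_on S. norm (g x) \<le> M)"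

definition dx :: "(complex \<Rightarrow> complex) \<Rightarrow> complex \<Rightarrow> complex" where
  "dx w z = vector_derivative (\<lambda>s::real. w (z + complex_of_real s)) (at 0)"
definition dy :: "(complex \<Rightarrow> complex) \<Rightarrow> complex \<Rightarrow> complex" where
  "dy w z = vector_derivative (\<lambda>s::real. w (z + \<i> * complex_of_real s)) (at 0)"

definition dz :: "(complex \<Rightarrow> complex) \<Rightarrow> complex \<Rightarrow> complex" where
  "dz w z = (dx w z - \<i> * dy w z) / 2"
definition dzbar :: "(complex \<Rightarrow> complex) \<Rightarrow> complex \<Rightarrow> complex" where
  "dzbar w z = (dx w z + \<i> * dy w z) / 2"

definition harmonic_on :: "complex set \<Rightarrow> (complex \<Rightarrow> complex) \<Rightarrow> bool" where
  "harmonic_on S w \<longleftrightarrow> open S \<and>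
     (\<forall>z\<in>S. w differentiable (at z) \<and> dx w differentiable (at z) \<and> dy w differentiable (at z)) \<and>
     continuous_on S (dx (dx w)) \<and> continuous_on S (dy (dx w)) \<and>
     continuous_on S (dx (dy w)) \<and> continuous_on S (dy (dy w)) \<and>
     (\<forall>z\<in>S. dx (dx w) z + dy (dy w) z = 0)"

definition quasiregular_on :: "complex set \<Rightarrow> (complex \<Rightarrow> complex) \<Rightarrow> bool" where
  "quasiregular_on S w \<longleftrightarrow> (\<exists>K\<ge>1. \<forall>z\<in>S.
     (cmod (dz w z) + cmod (dzbar w z))^2 \<le> K * ((cmod (dz w z))^2 - (cmod (dzbar w z))^2))"

end

theory Submission
  imports Defs "HOL-Complex_Analysis.Complex_Analysis"
begin

text \<open>
  On \<open>[0, 2\<pi>]\<close> the boundary map is \<open>e^(i \<psi>(t))\<close> with a piecewise affine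
  phase \<open>\<psi>\<close> of slopes \<open>a = 1 - 1/\<pi>\<close> and \<open>b = 1 + 1/\<pi>\<close>. Hence it is Lipschitz,
  and its Fourier coefficients are elementary:
  \<open>F\<^sub>n = i (e\<^sup>i + (-1)\<^sup>n) / (\<pi>\<^sup>2 (n - a)(n - b))\<close>, and the same with
  \<open>n + a, n + b\<close> for \<open>F\<^sub>-\<^sub>n\<close>. Writing \<open>w = h + conj g\<close>, the derivatives \<open>h'\<close>
  and \<open>g'\<close> on the radius \<open>[0, 1)\<close> are combinations of the power series with
  weights \<open>n / ((n \<mp> a)(n \<mp> b))\<close> and of their alternating versions. The weights
  behave like \<open>1/n\<close>, so the non-alternating series in \<open>h'\<close> grows like the harmonic
  series while the alternating ones stay bounded (Leibniz); the two weights differ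
  by \<open>O(1/n\<^sup>2)\<close>, so \<open>|h'| - |g'|\<close> stays bounded. Hence \<open>|w\<^sub>z| = |h'|\<close> is
  unbounded, which rules out both \<open>w\<^sub>z \<in> L\<^sup>\<infinity>\<close> and the quasiregularity
  inequality \<open>|h'| + |g'| \<le> K (|h'| - |g'|)\<close>. Finally \<open>w\<close> maps into the disc
  because \<open>w(z)\<close> is a Poisson average of non-constant unimodular boundary values.
\<close>

section \<open>Harmonic maps of the form \<open>h + conj g\<close>\<close>

lemma has_vector_derivative_holomorphic_line:
  assumes S: "open S" and f: "f holomorphic_on S" and z: "z \<in> S"
  shows "((\<lambda>s::real. f (z + c * of_real s)) has_vector_derivative (c * deriv f z)) (at 0)"
proof -
  have l: "((\<lambda>s::real. z + c * of_real s) has_vector_derivative c) (at 0)"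
    by (auto intro!: derivative_eq_intros)
  have d: "(f has_field_derivative deriv f z) (at ((\<lambda>s::real. z + c * of_real s) 0))"
    using holomorphic_derivI[OF f S z] by simp
  from field_vector_diff_chain_at[OF l d] show ?thesis by (simp add: o_def)
qed

context
  fixes S :: "complex set" and f g w :: "complex \<Rightarrow> complex"
  assumes S: "open S" and f: "f holomorphic_on S" and g: "g holomorphic_on S"
    and w: "\<And>x. x \<in> S \<Longrightarrow> w x = f x + cnj (g x)"
begin

lemma dx_dy_holomorphic_add_cnj:
  assumes z: "z \<in> S"
  shows "dx w z = deriv f z + cnj (deriv g z)"
    and "dy w z = \<i> * deriv f z + cnj (\<i> * deriv g z)"
proof -
  have key: "((\<lambda>s::real. w (z + c * of_real s)) has_vector_derivative
               (c * deriv f z + cnj (c * deriv g z))) (at 0)" for c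
  proof -
    have "((\<lambda>s::real. f (z + c * of_real s) + cnj (g (z + c * of_real s))) has_vector_derivative
            (c * deriv f z + cnj (c * deriv g z))) (at 0)"
      by (intro has_vector_derivative_add has_vector_derivative_cnj
            has_vector_derivative_holomorphic_line[OF S f z] has_vector_derivative_holomorphic_line[OF S g z])
    moreover have "open {s::real. z + c * of_real s \<in> S}"
      by (intro open_vimage[unfolded vimage_def, OF S] continuous_intros)
    moreover have "(0::real) \<in> {s::real. z + c * of_real s \<in> S}" using z by simp
    ultimately show ?thesis
      by (rule has_vector_derivative_transform_within_open) (auto simp: w)
  qed
  show "dx w z = deriv f z + cnj (deriv g z)"
    unfolding dx_def using vector_derivative_at[OF key[of 1]] by simp
  show "dy w z = \<i> * deriv f z + cnj (\<i> * deriv g z)"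
    unfolding dy_def using vector_derivative_at[OF key[of \<i>]] by simp
qed

lemma differentiable_holomorphic_add_cnj:
  assumes z: "z \<in> S"
  shows "w differentiable (at z)"
proof -
  have fd: "f field_differentiable (at z)" "g field_differentiable (at z)"
    using holomorphic_on_imp_differentiable_at[OF _ S] f g z by auto
  have "(\<lambda>x. cnj (g x)) differentiable (at z)"
    using differentiable_compose[of cnj, OF bounded_linear_imp_differentiable[OF bounded_linear_cnj]
        field_differentiable_imp_differentiable[OF fd(2)]]
    by (simp add: o_def)
  then have "(\<lambda>x. f x + cnj (g x)) differentiable (at z)"
    using differentiable_add[OF field_differentiable_imp_differentiable[OF fd(1)]] by blast
  moreover obtain d where "d > 0" "ball z d \<subseteq> S" using openE[OF S z] by metis
  ultimately show ?thesis
    using differentiable_transform_within[of "\<lambda>x. f x + cnj (g x)" z UNIV d w]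
    by (auto simp: w dist_commute subset_iff)
qed

end

lemma harmonic_on_holomorphic_add_cnj:
  assumes S: "open S" and f: "f holomorphic_on S" and g: "g holomorphic_on S"
    and w: "\<And>x. x \<in> S \<Longrightarrow> w x = f x + cnj (g x)"
  shows "harmonic_on S w"
proof -
  have f1: "deriv f holomorphic_on S" "deriv g holomorphic_on S"
    using holomorphic_deriv[OF f S] holomorphic_deriv[OF g S] by auto
  have c2: "continuous_on S (deriv (deriv f))" "continuous_on S (deriv (deriv g))"
    using holomorphic_deriv[OF f1(1) S] holomorphic_deriv[OF f1(2) S] holomorphic_on_imp_continuous_on
    by auto
  have f3: "(\<lambda>z. \<i> * deriv f z) holomorphic_on S" "(\<lambda>z. \<i> * deriv g z) holomorphic_on S"
    using f1 by (auto intro: holomorphic_on_mult holomorphic_on_const)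
  note dw = dx_dy_holomorphic_add_cnj[OF S f g w]
  have dxw: "\<And>x. x \<in> S \<Longrightarrow> dx w x = deriv f x + cnj (deriv g x)"
   and dyw: "\<And>x. x \<in> S \<Longrightarrow> dy w x = \<i> * deriv f x + cnj (\<i> * deriv g x)"
    using dw by simp_all
  have dm: "deriv (\<lambda>z. \<i> * deriv f z) x = \<i> * deriv (deriv f) x"
           "deriv (\<lambda>z. \<i> * deriv g z) x = \<i> * deriv (deriv g) x" if "x \<in> S" for x
    using that holomorphic_on_imp_differentiable_at[OF f1(1) S]
      holomorphic_on_imp_differentiable_at[OF f1(2) S]
    by (simp_all add: deriv_cmult)
  have dxx: "\<And>x. x \<in> S \<Longrightarrow> dx (dx w) x = deriv (deriv f) x + cnj (deriv (deriv g) x)"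
   and dyx: "\<And>x. x \<in> S \<Longrightarrow> dy (dx w) x = \<i> * deriv (deriv f) x + cnj (\<i> * deriv (deriv g) x)"
    using dx_dy_holomorphic_add_cnj[OF S f1 dxw] by simp_all
  have dxy: "\<And>x. x \<in> S \<Longrightarrow> dx (dy w) x = \<i> * deriv (deriv f) x + cnj (\<i> * deriv (deriv g) x)"
   and dyy: "\<And>x. x \<in> S \<Longrightarrow> dy (dy w) x = - deriv (deriv f) x - cnj (deriv (deriv g) x)"
    using dx_dy_holomorphic_add_cnj[OF S f3 dyw] dm by simp_all
  have "continuous_on S (dx (dx w))" "continuous_on S (dy (dx w))"
       "continuous_on S (dx (dy w))" "continuous_on S (dy (dy w))"
    by (simp_all only: continuous_on_eq[OF _ dxx[symmetric]] continuous_on_eq[OF _ dyx[symmetric]]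
          continuous_on_eq[OF _ dxy[symmetric]] continuous_on_eq[OF _ dyy[symmetric]]
          continuous_intros c2)
  moreover have "\<forall>z\<in>S. dx (dx w) z + dy (dy w) z = 0" using dxx dyy by simp
  moreover have "\<forall>z\<in>S. w differentiable (at z) \<and> dx w differentiable (at z) \<and> dy w differentiable (at z)"
    using differentiable_holomorphic_add_cnj[OF S f g w] differentiable_holomorphic_add_cnj[OF S f1 dxw]
      differentiable_holomorphic_add_cnj[OF S f3 dyw] by blast
  ultimately show ?thesis unfolding harmonic_on_def using S by blast
qed

lemma exp_i_affine_has_vector_derivative:
  "((\<lambda>t::real. exp (\<i> * of_real (c + d*t))) has_vector_derivative
      (\<i> * of_real d * exp (\<i> * of_real (c + d*t)))) (at t within S)"
proof -
  have l: "((\<lambda>t::real. \<i> * of_real (c + d*t)) has_vector_derivative (\<i> * of_real d)) (at t within S)"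
    by (auto intro!: derivative_eq_intros
        simp: has_vector_derivative_def has_derivative_of_real fun_eq_iff scaleR_conv_of_real)
  have "((exp \<circ> (\<lambda>t::real. \<i> * of_real (c + d*t))) has_vector_derivative
          (\<i> * of_real d * exp (\<i> * of_real (c + d*t)))) (at t within S)"
    by (rule field_vector_diff_chain_within[OF l]) (auto intro!: derivative_eq_intros)
  then show ?thesis by (simp add: o_def)
qed

lemma exp_i_affine_has_integral:
  assumes d: "d \<noteq> 0" and ab: "\<alpha> \<le> \<beta>"
  shows "((\<lambda>t. exp (\<i> * of_real (c + d*t))) has_integral
           ((exp (\<i> * of_real (c + d*\<beta>)) - exp (\<i> * of_real (c + d*\<alpha>))) / (\<i> * of_real d))) {\<alpha>..\<beta>}"
proof -
  define k where "k = inverse (\<i> * of_real d)"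
  have k: "\<i> * of_real d * k = 1" unfolding k_def by (rule right_inverse) (use d in simp)
  have "((\<lambda>t. exp (\<i> * of_real (c + d*t))) has_integral
          exp (\<i> * of_real (c + d*\<beta>)) * k - exp (\<i> * of_real (c + d*\<alpha>)) * k) {\<alpha>..\<beta>}"
  proof (rule fundamental_theorem_of_calculus[OF ab])
    fix x assume "x \<in> {\<alpha>..\<beta>}"
    have eq: "(\<i> * of_real d * exp (\<i> * of_real (c + d*x))) * k = exp (\<i> * of_real (c + d*x))"
      by (metis k mult.commute mult.left_commute mult_1_right)
    show "((\<lambda>t. exp (\<i> * of_real (c + d*t)) * k) has_vector_derivative exp (\<i> * of_real (c + d*x)))
            (at x within {\<alpha>..\<beta>})"
      using has_vector_derivative_mult_left[OF exp_i_affine_has_vector_derivative[of c d x "{\<alpha>..\<beta>}"], of k]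
      unfolding eq .
  qed
  then show ?thesis unfolding k_def divide_inverse by (simp only: left_diff_distrib)
qed

lemma exp_i_multiple_2pi: "exp (\<i> * of_real (real_of_int k * (2*pi))) = 1"
proof -
  have "\<i> * of_real (real_of_int k * (2*pi)) = (2 * of_int k * of_real pi) * \<i>" by simp
  then show ?thesis using exp_integer_2pi[of "of_int k"] by (simp add: mult_ac)
qed

lemma exp_i_add_2pi: "exp (\<i> * of_real (x + 2*pi)) = exp (\<i> * of_real x)"
proof -
  have "\<i> * of_real (x + 2*pi) = \<i> * of_real x + 2 * of_real pi * \<i>" by (simp add: algebra_simps)
  then show ?thesis by (simp add: exp_add exp_two_pi_i)
qed

lemma exp_i_add_pi: "exp (\<i> * of_real (pi + y)) = - exp (\<i> * of_real y)"
proof -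
  have "\<i> * of_real (pi + y) = of_real pi * \<i> + \<i> * of_real y" by (simp add: algebra_simps)
  then show ?thesis by (simp add: exp_add exp_pi_i)
qed

lemma norm_exp_i_diff_le: "norm (exp (\<i> * of_real u) - exp (\<i> * of_real v)) \<le> \<bar>u - v\<bar>"
proof -
  have "norm ((\<lambda>z. exp (\<i> * z)) (of_real u) - (\<lambda>z. exp (\<i> * z)) (of_real v))
          \<le> 1 * norm (of_real u - (of_real v :: complex))"
  proof (rule field_differentiable_bound[OF convex_Reals])
    show "((\<lambda>z. exp (\<i> * z)) has_field_derivative \<i> * exp (\<i> * z)) (at z within \<real>)" for z
      by (auto intro!: derivative_eq_intros)
    show "norm (\<i> * exp (\<i> * z)) \<le> 1" if "z \<in> \<real>" for z
      using that by (auto simp: norm_mult elim!: Reals_cases)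
  qed auto
  then show ?thesis by (simp flip: of_real_diff)
qed

lemma exp_i_nat_pi: "exp (\<i> * of_real (real n * pi)) = (-1)^n" "exp (\<i> * of_real (-(real n * pi))) = (-1)^n"
  "exp (\<i> * of_real (real n * (2*pi))) = 1" "exp (\<i> * of_real (-(real n * (2*pi)))) = 1"
proof -
  have a: "\<i> * of_real (real n * pi) = of_nat n * (of_real pi * \<i>)" by simp
  have b: "\<i> * of_real (-(real n * pi)) = of_nat n * (-(of_real pi * \<i>))" by simp
  have c: "\<i> * of_real (real n * (2*pi)) = of_nat n * (2 * of_real pi * \<i>)" by simp
  have d: "\<i> * of_real (-(real n * (2*pi))) = of_nat n * (-(2 * of_real pi * \<i>))" by simp
  show "exp (\<i> * of_real (real n * pi)) = (-1)^n" unfolding a exp_of_nat_mult exp_pi_i ..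
  show "exp (\<i> * of_real (-(real n * pi))) = (-1)^n" unfolding b exp_of_nat_mult exp_minus exp_pi_i by simp
  show "exp (\<i> * of_real (real n * (2*pi))) = 1" unfolding c exp_of_nat_mult exp_two_pi_i by simp
  show "exp (\<i> * of_real (-(real n * (2*pi)))) = 1" unfolding d exp_of_nat_mult exp_minus exp_two_pi_i by simp
qed

section \<open>The Poisson integral of a continuous function\<close>

definition fourier_coeff :: "(real \<Rightarrow> complex) \<Rightarrow> nat \<Rightarrow> complex" where
  "fourier_coeff f n = integral {0..2*pi} (\<lambda>t. exp (-(\<i> * of_real t)) ^ n * f t) / (2*pi)"

definition fourier_coeff_neg :: "(real \<Rightarrow> complex) \<Rightarrow> nat \<Rightarrow> complex" where
  "fourier_coeff_neg f n = integral {0..2*pi} (\<lambda>t. exp (\<i> * of_real t) ^ n * f t) / (2*pi)"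

lemma norm_fourier_coeff_le:
  assumes f: "continuous_on {0..2*pi} f" and fb: "\<And>t. t \<in> {0..2*pi} \<Longrightarrow> norm (f t) \<le> 1"
  shows "norm (fourier_coeff f n) \<le> 1" "norm (fourier_coeff_neg f n) \<le> 1"
proof -
  have "norm (integral {0..2*pi} (\<lambda>t. exp (-(\<i> * of_real t)) ^ n * f t)) \<le> integral {0..2*pi} (\<lambda>t. 1::real)"
    by (rule integral_norm_bound_integral)
      (auto intro!: integrable_continuous_real integrable_continuous_interval continuous_intros f
        simp: norm_mult norm_power fb)
  then show "norm (fourier_coeff f n) \<le> 1" by (simp add: fourier_coeff_def norm_divide)
  have "norm (integral {0..2*pi} (\<lambda>t. exp (\<i> * of_real t) ^ n * f t)) \<le> integral {0..2*pi} (\<lambda>t. 1::real)"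
    by (rule integral_norm_bound_integral)
      (auto intro!: integrable_continuous_real integrable_continuous_interval continuous_intros f
        simp: norm_mult norm_power fb)
  then show "norm (fourier_coeff_neg f n) \<le> 1" by (simp add: fourier_coeff_neg_def norm_divide)
qed

lemma summable_bounded_powser:
  fixes c :: "nat \<Rightarrow> 'a::{real_normed_field,banach}"
  assumes "\<And>n. norm (c n) \<le> C" "norm z < 1"
  shows "summable (\<lambda>n. c n * z ^ n)"
proof (rule summable_comparison_test[where g="\<lambda>n. C * norm z ^ n"])
  show "\<exists>N. \<forall>n\<ge>N. norm (c n * z ^ n) \<le> C * norm z ^ n"
    using assms(1) by (auto simp: norm_mult norm_power intro!: mult_right_mono)
  show "summable (\<lambda>n. C * norm z ^ n)" using assms(2) by (simp add: summable_geometric)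
qed

lemma poisson_kernel_geometric:
  fixes z :: complex and t :: real
  assumes z: "norm z < 1"
  defines "q \<equiv> z * exp (-(\<i> * of_real t))"
  shows "1 / (1 - q) + cnj q / (1 - cnj q) = of_real (2 * pi * poisson_kernel (cmod z) (t - Arg z))"
proof -
  have nq: "norm q = norm z" unfolding q_def by (simp add: norm_mult)
  have q1: "1 - q \<noteq> 0" "1 - cnj q \<noteq> 0" using nq z
    by (metis complex_cnj_one complex_cnj_diff complex_cnj_zero_iff norm_one right_minus_eq order_less_irrefl)+
  have zz: "z = of_real (cmod z) * cis (Arg z)"
    by (cases "z = 0") (simp_all add: Arg_eq cis_conv_exp)
  have qq: "q = of_real (cmod z) * cis (Arg z - t)"
    unfolding q_def by (subst zz) (simp add: cis_conv_exp exp_diff exp_minus field_simps flip: exp_add)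
  have req: "Re q = cmod z * cos (t - Arg z)"
    by (simp add: qq cos_diff mult.commute)
  have prod: "(1 - q) * (1 - cnj q) = of_real (1 - 2 * cmod z * cos (t - Arg z) + (cmod z)^2)"
  proof -
    have "(1 - q) * (1 - cnj q) = 1 - (q + cnj q) + q * cnj q" by (simp add: algebra_simps)
    also have "\<dots> = 1 - of_real (2 * Re q) + of_real ((norm q)^2)"
      using complex_norm_square[of q] by (simp add: complex_add_cnj)
    finally show ?thesis by (simp add: req nq)
  qed
  have "1 / (1 - q) + cnj q / (1 - cnj q) = (1 - q * cnj q) / ((1 - q) * (1 - cnj q))"
    using q1 by (simp add: field_simps)
  also have "\<dots> = of_real ((1 - (cmod z)^2) / (1 - 2 * cmod z * cos (t - Arg z) + (cmod z)^2))"
    by (simp add: prod complex_norm_square[symmetric] nq)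
  finally show ?thesis unfolding poisson_kernel_def by simp
qed

lemma poisson_kernel_sums:
  fixes z :: complex and t :: real
  assumes z: "norm z < 1"
  defines "q \<equiv> z * exp (-(\<i> * of_real t))"
  shows "(\<lambda>n. (q^n + cnj q ^ Suc n) / (2*pi)) sums of_real (poisson_kernel (cmod z) (t - Arg z))"
proof -
  have nq: "norm q < 1" using z unfolding q_def by (simp add: norm_mult)
  have g1: "(\<lambda>n. q^n) sums (1 / (1 - q))" using geometric_sums[of q] nq by simp
  have g2: "(\<lambda>n. cnj q ^ Suc n) sums (cnj q * (1 / (1 - cnj q)))"
    using sums_mult[OF geometric_sums[of "cnj q"], of "cnj q"] nq by simp
  have "(\<lambda>n. (q^n + cnj q ^ Suc n) / (2*pi)) sums ((1 / (1 - q) + cnj q / (1 - cnj q)) / (2*pi))"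
    by (intro sums_divide) (use sums_add[OF g1 g2] in simp)
  then show ?thesis unfolding q_def poisson_kernel_geometric[OF z] by simp
qed

lemma poisson_series_term_has_integral:
  fixes z :: complex
  assumes f: "continuous_on {0..2*pi} f"
  defines "q \<equiv> \<lambda>t. z * exp (-(\<i> * of_real t))"
  shows "((\<lambda>t. ((q t)^n + cnj (q t) ^ Suc n) / (2*pi) * f t) has_integral
           fourier_coeff f n * z^n + fourier_coeff_neg f (Suc n) * cnj z ^ Suc n) {0..2*pi}"
proof -
  have e: "((q t)^n + cnj (q t) ^ Suc n) / (2*pi) * f t
             = z^n / (2*pi) * (exp (-(\<i> * of_real t)) ^ n * f t)
               + cnj z ^ Suc n / (2*pi) * (exp (\<i> * of_real t) ^ Suc n * f t)" for t
    unfolding q_def by (simp add: power_mult_distrib exp_cnj field_simps)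
  have i1: "((\<lambda>t. exp (-(\<i> * of_real t)) ^ n * f t) has_integral (2*pi) * fourier_coeff f n) {0..2*pi}"
    unfolding fourier_coeff_def
    by (simp, rule integrable_integral, intro integrable_continuous_interval continuous_intros f)
  have i2: "((\<lambda>t. exp (\<i> * of_real t) ^ Suc n * f t) has_integral (2*pi) * fourier_coeff_neg f (Suc n))
              {0..2*pi}"
    unfolding fourier_coeff_neg_def
    by (simp, rule integrable_integral, intro integrable_continuous_interval continuous_intros f)
  show ?thesis
    unfolding e
    using has_integral_add[OF has_integral_mult_right[OF i1, of "z^n / (2*pi)"]
        has_integral_mult_right[OF i2, of "cnj z ^ Suc n / (2*pi)"]]
    by (simp add: field_simps)
qed

text \<open>The two geometric series of \<open>poisson_kernel_sums\<close> converge uniformly in \<open>t\<close>, so they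
  can be integrated term by term.\<close>

lemma poisson_integral_fourier_series:
  assumes f: "continuous_on {0..2*pi} f" and fb: "\<And>t. t \<in> {0..2*pi} \<Longrightarrow> norm (f t) \<le> 1"
    and z: "norm z < 1"
  shows "integral {0..2*pi} (\<lambda>t. of_real (poisson_kernel (cmod z) (t - Arg z)) * f t)
       = (\<Sum>n. fourier_coeff f n * z^n) + (\<Sum>n. fourier_coeff_neg f (Suc n) * cnj z ^ Suc n)"
proof -
  define q where "q t = z * exp (-(\<i> * of_real t))" for t :: real
  define u where "u n t = ((q t)^n + cnj (q t) ^ Suc n) / (2*pi) * f t" for n t
  have nq: "norm (q t) = norm z" for t unfolding q_def by (simp add: norm_mult)
  have ubound: "norm (u n t) \<le> norm z ^ n / pi" if "t \<in> {0..2*pi}" for n t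
  proof -
    have "norm ((q t)^n + cnj (q t) ^ Suc n) \<le> norm z ^ n + norm z ^ Suc n"
      by (rule order_trans[OF norm_triangle_ineq]) (simp add: norm_power norm_mult nq)
    also have "\<dots> \<le> 2 * norm z ^ n" using z by (simp add: mult_left_le_one_le)
    finally have a: "norm ((q t)^n + cnj (q t) ^ Suc n) \<le> 2 * norm z ^ n" .
    have "norm (u n t) = norm ((q t)^n + cnj (q t) ^ Suc n) / (2*pi) * norm (f t)"
      unfolding u_def by (simp add: norm_mult norm_divide)
    also have "\<dots> \<le> (2 * norm z ^ n) / (2*pi) * 1"
      by (intro mult_mono divide_right_mono a fb that) auto
    finally show ?thesis by simp
  qed
  have ul: "uniform_limit {0..2*pi} (\<lambda>N t. \<Sum>n<N. u n t) (\<lambda>t. \<Sum>n. u n t) sequentially"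
    by (rule Weierstrass_m_test[OF ubound]) (use z in \<open>auto intro!: summable_divide summable_geometric\<close>)
  have uc: "continuous_on {0..2*pi} (\<lambda>t. \<Sum>n<N. u n t)" for N
    unfolding u_def q_def by (intro continuous_intros f) auto
  obtain I J where I: "\<And>N. ((\<lambda>t. \<Sum>n<N. u n t) has_integral I N) {0..2*pi}"
    and J: "((\<lambda>t. \<Sum>n. u n t) has_integral J) {0..2*pi}" and IJ: "I \<longlonglongrightarrow> J"
    using uniform_limit_integral[OF ul uc] by auto
  define c where "c n = fourier_coeff f n * z^n + fourier_coeff_neg f (Suc n) * cnj z ^ Suc n" for n
  have "(u n has_integral c n) {0..2*pi}" for n
    unfolding u_def q_def c_def by (rule poisson_series_term_has_integral[OF f])
  then have "I = (\<lambda>N. \<Sum>n<N. c n)"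
    using has_integral_unique[OF I has_integral_sum[of "{..<N}" for N]] by (simp add: fun_eq_iff)
  moreover have sa: "summable (\<lambda>n. fourier_coeff f n * z^n)"
    by (rule summable_bounded_powser[OF norm_fourier_coeff_le(1)[OF f fb] z])
  have "summable (\<lambda>n. fourier_coeff_neg f (Suc n) * cnj z ^ n)"
    using summable_bounded_powser[OF norm_fourier_coeff_le(2)[OF f fb], of "cnj z"] z by simp
  then have sb: "summable (\<lambda>n. fourier_coeff_neg f (Suc n) * cnj z ^ Suc n)"
    using summable_mult[of _ "cnj z"] by (simp add: mult.left_commute)
  have "c sums ((\<Sum>n. fourier_coeff f n * z^n) + (\<Sum>n. fourier_coeff_neg f (Suc n) * cnj z ^ Suc n))"
    unfolding c_def by (intro sums_add summable_sums sa sb)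
  ultimately have "J = (\<Sum>n. fourier_coeff f n * z^n) + (\<Sum>n. fourier_coeff_neg f (Suc n) * cnj z ^ Suc n)"
    using LIMSEQ_unique[OF IJ] unfolding sums_def by simp
  moreover have "(\<lambda>n. u n t) sums (of_real (poisson_kernel (cmod z) (t - Arg z)) * f t)" for t
    unfolding u_def q_def by (rule sums_mult2[OF poisson_kernel_sums[OF z]])
  then have "(\<lambda>t. \<Sum>n. u n t) = (\<lambda>t. of_real (poisson_kernel (cmod z) (t - Arg z)) * f t)"
    using sums_unique by (intro ext) (rule sym, blast)
  ultimately show ?thesis using integral_unique[OF J] by simp
qed

lemma poisson_kernel_denominator_pos:
  fixes r s :: real
  assumes "\<bar>r\<bar> < 1" shows "1 - 2 * r * cos s + r^2 > 0"
proof -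
  have "\<bar>r * cos s\<bar> \<le> \<bar>r\<bar>" by (simp add: abs_mult mult_left_le)
  moreover have "(1 - \<bar>r\<bar>)^2 > 0" using assms by simp
  ultimately show ?thesis by (simp add: power2_eq_square algebra_simps abs_if split: if_splits)
qed

lemma poisson_kernel_pos:
  assumes "\<bar>r\<bar> < 1" shows "poisson_kernel r s > 0"
proof -
  have "r^2 < 1" using assms by (simp add: abs_square_less_1)
  then show ?thesis unfolding poisson_kernel_def using poisson_kernel_denominator_pos[OF assms] by simp
qed

lemma continuous_on_poisson_kernel:
  assumes "\<bar>r\<bar> < 1" shows "continuous_on S (\<lambda>t. poisson_kernel r (t - c))"
  unfolding poisson_kernel_def using poisson_kernel_denominator_pos[OF assms]
  by (intro continuous_intros) (auto simp: less_imp_neq[THEN not_sym])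

lemma fourier_coeff_const_1: "fourier_coeff (\<lambda>_. 1) n = (if n = 0 then 1 else 0)"
  and fourier_coeff_neg_const_1: "fourier_coeff_neg (\<lambda>_. 1) (Suc n) = 0"
proof -
  have int0: "((\<lambda>t. exp (\<i> * of_real (0 + real_of_int k * t))) has_integral 0) {0..2*pi}"
    if "k \<noteq> 0" for k :: int
  proof -
    have v: "(exp (\<i> * of_real (0 + real_of_int k * (2*pi))) - exp (\<i> * of_real (0 + real_of_int k * 0)))
             / (\<i> * of_real (real_of_int k)) = 0"
      by (simp only: add_0_left exp_i_multiple_2pi) simp
    show ?thesis using exp_i_affine_has_integral[of "real_of_int k" 0 "2*pi" 0] that unfolding v by simp
  qed
  show "fourier_coeff (\<lambda>_. 1) n = (if n = 0 then 1 else 0)"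
  proof (cases "n = 0")
    case False
    have "exp (-(\<i> * of_real t)) ^ n = exp (\<i> * of_real (0 + real_of_int (- int n) * t))" for t
      by (simp add: exp_of_nat_mult[symmetric] algebra_simps)
    then show ?thesis using int0[of "- int n"] False by (simp add: fourier_coeff_def integral_unique)
  qed (simp add: fourier_coeff_def scaleR_conv_of_real)
  have "exp (\<i> * of_real t) ^ Suc n = exp (\<i> * of_real (0 + real_of_int (int (Suc n)) * t))" for t
    by (simp only: exp_of_nat_mult[symmetric]) (simp add: algebra_simps)
  then show "fourier_coeff_neg (\<lambda>_. 1) (Suc n) = 0"
    using int0[of "int (Suc n)"] by (simp add: fourier_coeff_neg_def integral_unique)
qed

lemma poisson_kernel_has_integral:
  assumes z: "norm z < 1"
  shows "((\<lambda>t. poisson_kernel (cmod z) (t - Arg z)) has_integral 1) {0..2*pi}"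
proof -
  let ?P = "\<lambda>t. poisson_kernel (cmod z) (t - Arg z)"
  have "integral {0..2*pi} (\<lambda>t. of_real (?P t) * (1::complex))
      = (\<Sum>n. fourier_coeff (\<lambda>_. 1) n * z^n) + (\<Sum>n. fourier_coeff_neg (\<lambda>_. 1) (Suc n) * cnj z ^ Suc n)"
    by (rule poisson_integral_fourier_series[OF _ _ z]) auto
  also have "(\<lambda>n. fourier_coeff (\<lambda>_. 1) n * z^n) = (\<lambda>n. if n = 0 then 1 else 0)"
    by (simp add: fourier_coeff_const_1 fun_eq_iff)
  also have "(\<Sum>n. if n = 0 then 1 else 0) = (1::complex)"
    using sums_single[of 0 "\<lambda>_. 1::complex"] by (simp add: sums_iff)
  finally have "integral {0..2*pi} (\<lambda>t. of_real (?P t)) = (1::complex)"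
    by (simp add: fourier_coeff_neg_const_1)
  moreover have hi: "(?P has_integral integral {0..2*pi} ?P) {0..2*pi}"
    using z by (intro integrable_integral integrable_continuous_interval continuous_on_poisson_kernel) simp
  ultimately have "of_real (integral {0..2*pi} ?P) = (1::complex)"
    using integral_unique[OF has_integral_linear[OF hi bounded_linear_of_real[where 'a=complex]]]
    by (simp add: o_def)
  then show ?thesis using hi by simp
qed

lemma complex_eq_1_if_Re_eq_1:
  fixes w :: complex assumes "norm w \<le> 1" "Re w = 1" shows "w = 1"
proof -
  have "(Re w)^2 + (Im w)^2 \<le> 1" using assms(1) by (simp add: cmod_def)
  then have "Im w = 0" using assms(2) by simp
  then show ?thesis using assms(2) by (simp add: complex_eq_iff)
qed

lemma Re_cnj_sgn_mult_self: "Re (cnj (sgn w) * w) = norm w" for w :: complex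
proof -
  have "cnj w * w = of_real ((norm w)^2)" by (metis complex_norm_square mult.commute of_real_power)
  then show ?thesis by (cases "w = 0") (simp_all add: sgn_div_norm power2_eq_square)
qed

text \<open>Rotating the average \<open>W\<close> onto the positive axis by \<open>u = sgn W\<close>, \<open>1 - |W|\<close> is the
  integral of \<open>K (1 - Re (conj u * f))\<close>, a non-negative continuous function; if \<open>|W| \<ge> 1\<close> it
  vanishes identically, forcing \<open>f = u\<close> on \<open>[a, b]\<close>.\<close>

lemma norm_weighted_average_less_1:
  fixes K :: "real \<Rightarrow> real" and f :: "real \<Rightarrow> complex"
  assumes Kc: "continuous_on {a..b} K" and Kp: "\<And>t. t \<in> {a..b} \<Longrightarrow> K t > 0"
    and KI: "(K has_integral 1) {a..b}"
    and fc: "continuous_on {a..b} f" and fb: "\<And>t. t \<in> {a..b} \<Longrightarrow> norm (f t) \<le> 1"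
    and xy: "x \<in> {a..b}" "y \<in> {a..b}" "f x \<noteq> f y"
  shows "norm (integral {a..b} (\<lambda>t. of_real (K t) * f t)) < 1"
proof (rule ccontr)
  define W where "W = integral {a..b} (\<lambda>t. of_real (K t) * f t)"
  assume "\<not> norm (integral {a..b} (\<lambda>t. of_real (K t) * f t)) < 1"
  then have nW: "norm W \<ge> 1" unfolding W_def by simp
  have IW: "((\<lambda>t. of_real (K t) * f t) has_integral W) {a..b}"
    unfolding W_def by (intro integrable_integral integrable_continuous_interval continuous_intros Kc fc)
  define u where "u = sgn W"
  have nu: "norm u = 1" unfolding u_def using nW by (auto simp: norm_sgn)
  have uW: "Re (cnj u * W) = norm W" unfolding u_def by (rule Re_cnj_sgn_mult_self)
  have IR: "((\<lambda>t. Re (cnj u * (of_real (K t) * f t))) has_integral norm W) {a..b}"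
    using has_integral_linear[OF has_integral_mult_right[OF IW, of "cnj u"] bounded_linear_Re]
    unfolding uW by (simp add: o_def)
  define g where "g t = K t * (1 - Re (cnj u * f t))" for t
  have IG: "(g has_integral (1 - norm W)) {a..b}"
    using has_integral_diff[OF KI IR] unfolding g_def by (simp add: algebra_simps)
  have Re_le: "Re (cnj u * f t) \<le> 1" if "t \<in> {a..b}" for t
    using complex_Re_le_cmod[of "cnj u * f t"] fb[OF that] nu by (simp add: norm_mult)
  have gpos: "g t \<ge> 0" if "t \<in> {a..b}" for t
    unfolding g_def using Kp[OF that] Re_le[OF that] by simp
  have "1 - norm W \<ge> 0" by (rule has_integral_nonneg[OF IG gpos])
  then have IG0: "(g has_integral 0) (cbox a b)" using IG nW by simp
  have gc: "continuous_on (cbox a b) g"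
    unfolding g_def by (intro continuous_intros Kc[unfolded atLeastAtMost_def] fc) (auto simp: Kc fc cbox_interval)
  have "a < b" using xy by (cases "x = y") (auto simp: less_eq_real_def)
  have one_at: "cnj u * f t = 1" if "t \<in> {a..b}" for t
  proof (rule complex_eq_1_if_Re_eq_1)
    show "norm (cnj u * f t) \<le> 1" using nu fb[OF that] by (simp add: norm_mult)
    have "g t = 0"
      by (rule has_integral_0_cbox_imp_0[OF gc _ IG0]) (use gpos that \<open>a < b\<close> in auto)
    then show "Re (cnj u * f t) = 1" using Kp[OF that] unfolding g_def by simp
  qed
  then have "cnj u * f x = cnj u * f y" using xy by simp
  then show False using nu xy(3) by auto
qed

lemma lipschitz_imp_abs_continuous_on:
  fixes f :: "real \<Rightarrow> 'a::real_normed_vector"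
  assumes lip: "\<And>x y. x \<in> S \<Longrightarrow> y \<in> S \<Longrightarrow> x \<le> y
                  \<Longrightarrow> norm (f y - f x) \<le> L * (y - x)"
  shows "abs_continuous_on S f"
  unfolding abs_continuous_on_def
proof (intro allI impI)
  fix e :: real assume e: "e > 0"
  define M where "M = \<bar>L\<bar> + 1"
  have M: "M > 0" "L \<le> M" unfolding M_def by auto
  show "\<exists>\<delta>>0. \<forall>n a b. (\<forall>i<n. a i \<le> b i \<and> {a i..b i} \<subseteq> S) \<and>
            (\<forall>i<n. \<forall>j<n. i \<noteq> j \<longrightarrow> b i \<le> a j \<or> b j \<le> a i) \<and>
            (\<Sum>i<n. b i - a i) < \<delta> \<longrightarrow>
            (\<Sum>i<n. norm (f (b i) - f (a i))) < e"
  proof (intro exI[of _ "e / M"] conjI allI impI)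
    show "e / M > 0" using e M by simp
    fix n a b
    assume h: "(\<forall>i<n. a i \<le> b i \<and> {a i..b i} \<subseteq> S) \<and>
            (\<forall>i<n. \<forall>j<n. i \<noteq> j \<longrightarrow> b i \<le> a j \<or> b j \<le> a i) \<and>
            (\<Sum>i<n. b i - a i) < e / M"
    have "(\<Sum>i<n. norm (f (b i) - f (a i))) \<le> (\<Sum>i<n. M * (b i - a i))"
    proof (rule sum_mono)
      fix i assume "i \<in> {..<n}"
      then have "a i \<le> b i" "{a i..b i} \<subseteq> S" using h by auto
      then have "a i \<le> b i" "a i \<in> S" "b i \<in> S" by auto
      then show "norm (f (b i) - f (a i)) \<le> M * (b i - a i)"
        using lip[of "a i" "b i"] M(2) by (smt (verit) mult_right_mono)
    qed
    also have "\<dots> = M * (\<Sum>i<n. b i - a i)" by (simp add: sum_distrib_left)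
    also have "\<dots> < M * (e / M)" using h M by (intro mult_strict_left_mono) auto
    also have "\<dots> = e" using M by simp
    finally show "(\<Sum>i<n. norm (f (b i) - f (a i))) < e" .
  qed
qed

lemma continuous_AE_bound_imp_bound:
  fixes g :: "'a::euclidean_space \<Rightarrow> 'b::real_normed_vector"
  assumes S: "open S" and g: "continuous_on S g"
    and ae: "AE x in lebesgue_on S. norm (g x) \<le> M" and z: "z \<in> S"
  shows "norm (g z) \<le> M"
proof (rule ccontr)
  assume "\<not> norm (g z) \<le> M"
  define U where "U = (\<lambda>x. norm (g x)) -` {M<..} \<inter> S"
  have "open U"
    unfolding U_def using continuous_on_norm[OF g] S by (subst (asm) continuous_on_open_vimage) auto
  moreover have "z \<in> U" unfolding U_def using z \<open>\<not> norm (g z) \<le> M\<close> by simp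
  ultimately obtain d where d: "d > 0" "ball z d \<subseteq> U" by (metis openE)
  have "AE x in lebesgue_on S. x \<notin> ball z d"
    using ae by (rule lebesgue_on_mono) (use d in \<open>auto simp: U_def\<close>)
  then have "AE x in lebesgue. x \<in> S \<longrightarrow> x \<notin> ball z d"
    by (subst (asm) AE_restrict_space_iff) (auto simp: S)
  then have "AE x in lebesgue. x \<notin> ball z d"
    by (rule eventually_mono) (use d in \<open>auto simp: U_def\<close>)
  then have "AE x in lborel. x \<notin> ball z d" by (simp add: AE_completion_iff)
  then have "emeasure lborel (ball z d) = 0"
    by (subst (asm) AE_iff_measurable[of "ball z d"]) auto
  moreover have "emeasure lborel (ball z d) > 0"
    using d unit_ball_vol_pos[of "real DIM('a)"] by (simp add: emeasure_ball)
  ultimately show False by simp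
qed

section \<open>The boundary map\<close>

definition slope_lo :: real where "slope_lo = 1 - 1/pi"
definition slope_hi :: real where "slope_hi = 1 + 1/pi"

text \<open>The lift of \<open>\<phi>\<close> to \<open>[0, 2\<pi>]\<close>: it is \<open>\<phi>\<^sub>0\<close> on \<open>[0, \<pi>]\<close> and
  \<open>\<phi>\<^sub>0(t - 2\<pi>) + 2\<pi>\<close> on \<open>[\<pi>, 2\<pi>]\<close>.\<close>

definition phase :: "real \<Rightarrow> real" where
  "phase t = 1 + slope_lo * t + (2/pi) * max 0 (t - pi)"

definition boundary :: "real \<Rightarrow> complex" where
  "boundary t = exp (\<i> * of_real (phase t))"

lemma slope_lo_hi:
  "0 < slope_lo" "slope_lo < 1" "1 < slope_hi" "slope_hi < 2" "slope_hi - slope_lo = 2/pi"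
  "slope_lo * pi = pi - 1" "slope_hi * pi = pi + 1"
  "slope_lo + slope_hi = 2" "slope_lo * slope_hi < 1"
  using pi_gt3 less_1_mult[of pi pi] by (auto simp: slope_lo_def slope_hi_def field_simps)

lemma phase_le_pi: "t \<le> pi \<Longrightarrow> phase t = 1 + slope_lo * t"
  by (simp add: phase_def)

lemma phase_ge_pi: "t \<ge> pi \<Longrightarrow> phase t = slope_hi * t - 1"
  by (simp add: phase_def slope_lo_def slope_hi_def field_simps)

lemma phi_eq_phi0: assumes "-pi \<le> x" "x < pi" shows "phi x = phi0 x"
proof -
  have "\<lfloor>(x + pi) / (2*pi)\<rfloor> = 0"
    using assms pi_gt_zero by (subst floor_eq_iff) (auto simp: field_simps)
  then show ?thesis by (simp add: phi_def)
qed

lemma phi_pi: "phi pi = pi"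
proof -
  have "\<lfloor>(pi + pi) / (2*pi)\<rfloor> = 1" by simp
  then show ?thesis by (simp add: phi_def phi0_def field_simps)
qed

lemma Fb_eq_boundary:
  assumes t: "0 \<le> t" "t \<le> 2*pi" shows "Fb (exp (\<i> * of_real t)) = boundary t"
proof -
  consider "t \<le> pi" | "pi < t" "t < 2*pi" | "t = 2*pi" using t by linarith
  then show ?thesis
  proof cases
    case 1
    have "- pi < t" using t pi_gt_zero by linarith
    then have "Arg (exp (\<i> * of_real t)) = t" by (subst Arg_exp) (use 1 in auto)
    moreover have "phi t = phase t"
      using 1 t pi_gt_zero by (cases "t = pi") (simp_all add: phi_pi phi_eq_phi0 phi0_def phase_le_pi slope_lo_def field_simps)
    ultimately show ?thesis by (simp add: Fb_def boundary_def)
  next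
    case 2
    have e: "exp (\<i> * of_real t) = exp (\<i> * of_real (t - 2*pi))"
      using exp_i_add_2pi[of "t - 2*pi"] by simp
    have "Arg (exp (\<i> * of_real t)) = t - 2*pi" unfolding e using 2 by (subst Arg_exp) auto
    moreover have "phi (t - 2*pi) = phase t - 2*pi" using 2
      by (simp add: phi_eq_phi0 phi0_def phase_ge_pi slope_hi_def field_simps)
    ultimately show ?thesis
      using exp_i_add_2pi[of "phase t - 2*pi"] by (simp add: Fb_def boundary_def)
  next
    case 3
    have e: "exp (\<i> * of_real t) = 1" using 3 exp_two_pi_i by (simp add: mult.commute)
    have "phi 0 = 1" by (simp add: phi_eq_phi0 phi0_def)
    moreover have "phase t = 1 + 2*pi" using 3 by (simp add: phase_ge_pi slope_hi_def field_simps)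
    ultimately show ?thesis
      using exp_i_add_2pi[of 1] e by (simp add: Fb_def boundary_def)
  qed
qed

lemma phase_lipschitz: "\<bar>phase y - phase x\<bar> \<le> slope_hi * \<bar>y - x\<bar>"
proof -
  have m: "\<bar>max 0 (y - pi) - max 0 (x - pi)\<bar> \<le> \<bar>y - x\<bar>" by (simp add: max_def)
  have "\<bar>phase y - phase x\<bar> = \<bar>slope_lo * (y - x) + (2/pi) * (max 0 (y - pi) - max 0 (x - pi))\<bar>"
    by (simp add: phase_def algebra_simps)
  also have "\<dots> \<le> slope_lo * \<bar>y - x\<bar> + (2/pi) * \<bar>max 0 (y - pi) - max 0 (x - pi)\<bar>"
    using abs_triangle_ineq[of "slope_lo * (y - x)" "(2/pi) * (max 0 (y - pi) - max 0 (x - pi))"] slope_lo_hi(1)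
    by (simp only: abs_mult abs_of_pos pi_gt_zero divide_pos_pos zero_less_numeral)
  also have "\<dots> \<le> slope_lo * \<bar>y - x\<bar> + (2/pi) * \<bar>y - x\<bar>"
    by (intro add_left_mono mult_left_mono m) simp
  also have "\<dots> = slope_hi * \<bar>y - x\<bar>" by (simp add: slope_lo_def slope_hi_def field_simps)
  finally show ?thesis .
qed

lemma boundary_lipschitz: "norm (boundary y - boundary x) \<le> slope_hi * \<bar>y - x\<bar>"
  unfolding boundary_def using norm_exp_i_diff_le[of "phase y" "phase x"] phase_lipschitz[of y x] by linarith

lemma norm_boundary [simp]: "norm (boundary t) = 1"
  by (simp add: boundary_def)

lemma continuous_on_boundary: "continuous_on A boundary"
  unfolding boundary_def phase_def by (intro continuous_intros)

lemma boundary_0: "boundary 0 = exp \<i>" and boundary_pi: "boundary pi = -1"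
  using slope_lo_hi(6) by (simp_all add: boundary_def phase_def exp_pi_i mult.commute)

lemma abs_continuous_on_Fb: "abs_continuous_on {0..2*pi} (\<lambda>t. Fb (exp (\<i> * complex_of_real t)))"
  by (rule lipschitz_imp_abs_continuous_on[where L=slope_hi])
    (metis Fb_eq_boundary abs_of_nonneg atLeastAtMost_iff boundary_lipschitz diff_ge_0_iff_ge)

definition boundary_deriv :: "real \<Rightarrow> complex" where
  "boundary_deriv t = \<i> * of_real (if t < pi then slope_lo else slope_hi) * boundary t"

lemma Fb_has_vector_derivative:
  assumes t: "0 < t" "t < 2*pi" "t \<noteq> pi"
  shows "((\<lambda>s. Fb (exp (\<i> * of_real s))) has_vector_derivative boundary_deriv t) (at t)"
proof (cases "t < pi")
  case True
  have "((\<lambda>s. Fb (exp (\<i> * of_real s))) has_vector_derivative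
          (\<i> * of_real slope_lo * exp (\<i> * of_real (1 + slope_lo*t)))) (at t)"
  proof (rule has_vector_derivative_transform_within_open[OF exp_i_affine_has_vector_derivative, of "{0<..<pi}"])
    fix y :: real assume "y \<in> {0<..<pi}"
    then show "exp (\<i> * of_real (1 + slope_lo*y)) = Fb (exp (\<i> * of_real y))"
      using Fb_eq_boundary[of y] by (simp add: boundary_def phase_le_pi)
  qed (use t True in auto)
  then show ?thesis using True by (simp add: boundary_deriv_def boundary_def phase_le_pi)
next
  case False
  have "((\<lambda>s. Fb (exp (\<i> * of_real s))) has_vector_derivative
          (\<i> * of_real slope_hi * exp (\<i> * of_real (-1 + slope_hi*t)))) (at t)"
  proof (rule has_vector_derivative_transform_within_open[OF exp_i_affine_has_vector_derivative, of "{pi<..<2*pi}"])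
    fix y :: real assume "y \<in> {pi<..<2*pi}"
    then show "exp (\<i> * of_real (-1 + slope_hi*y)) = Fb (exp (\<i> * of_real y))"
      using Fb_eq_boundary[of y] pi_gt_zero by (simp add: boundary_def phase_ge_pi)
  qed (use t False in auto)
  then show ?thesis using False by (simp add: boundary_deriv_def boundary_def phase_ge_pi)
qed

lemma in_Linf_boundary_deriv: "in_Linf S boundary_deriv"
proof -
  have "boundary_deriv \<in> borel_measurable borel"
    using borel_measurable_continuous_onI[OF continuous_on_boundary]
    unfolding boundary_deriv_def[abs_def] by measurable
  then have "boundary_deriv \<in> borel_measurable (lebesgue_on S)"
    by (intro measurable_restrict_space1 measurable_completion) (simp add: measurable_lborel1)
  moreover have "norm (boundary_deriv t) \<le> slope_hi" for t
    using slope_lo_hi by (auto simp: boundary_deriv_def norm_mult)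
  ultimately show ?thesis unfolding in_Linf_def by auto
qed

lemma Fb_derivative_in_Linf:
  "\<exists>Fdot. (AE t in lebesgue_on {0<..<2*pi}.
              ((\<lambda>s. Fb (exp (\<i> * complex_of_real s))) has_vector_derivative Fdot t) (at t))
          \<and> in_Linf {0<..<2*pi} Fdot"
proof (intro exI conjI)
  have "AE t in lebesgue. t \<noteq> pi" by (rule AE_completion[OF AE_lborel_singleton])
  then have "AE t in lebesgue_on {0<..<2*pi}. t \<noteq> pi"
    by (subst AE_restrict_space_iff) (auto elim: eventually_mono)
  then show "AE t in lebesgue_on {0<..<2*pi}.
      ((\<lambda>s. Fb (exp (\<i> * complex_of_real s))) has_vector_derivative boundary_deriv t) (at t)"
    by (rule lebesgue_on_mono) (auto intro: Fb_has_vector_derivative)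
qed (rule in_Linf_boundary_deriv)

section \<open>Fourier coefficients of the boundary map\<close>

lemma exp_phase_integral_algebra:
  fixes X :: complex
  assumes na: "\<nu> \<noteq> slope_lo" and nb: "\<nu> \<noteq> slope_hi"
  shows "(- X) / (\<i> * of_real (slope_lo - \<nu>)) + X / (\<i> * of_real (slope_hi - \<nu>))
       = (2*pi) * (\<i> * X / of_real (pi^2 * ((\<nu> - slope_lo) * (\<nu> - slope_hi))))"
proof -
  have nz: "slope_lo - \<nu> \<noteq> 0" "slope_hi - \<nu> \<noteq> 0" "\<nu> - slope_lo \<noteq> 0" "\<nu> - slope_hi \<noteq> 0"
    using na nb by auto
  have r0: "1/(slope_hi - \<nu>) - 1/(slope_lo - \<nu>) = (slope_lo - slope_hi) / ((\<nu> - slope_lo) * (\<nu> - slope_hi))"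
    using nz by (simp add: field_simps)
  have ab: "slope_lo - slope_hi = -(2/pi)" using slope_lo_hi(5) by simp
  have r: "1/(slope_hi - \<nu>) - 1/(slope_lo - \<nu>) = -(2/pi) / ((\<nu> - slope_lo) * (\<nu> - slope_hi))"
    using r0 unfolding ab .
  have gen: "(- X) / (\<i> * A) + X / (\<i> * B) = - \<i> * X * (1/B - 1/A)" if "A \<noteq> 0" "B \<noteq> 0" for A B :: complex
    using that by (simp add: field_simps)
  have "(- X) / (\<i> * of_real (slope_lo - \<nu>)) + X / (\<i> * of_real (slope_hi - \<nu>))
      = - \<i> * X * (1/of_real (slope_hi - \<nu>) - 1/of_real (slope_lo - \<nu>))"
    by (rule gen) (use nz in auto)
  also have "\<dots> = - \<i> * X * of_real (1/(slope_hi - \<nu>) - 1/(slope_lo - \<nu>))" by simp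
  also have "\<dots> = - \<i> * X * of_real (-(2/pi) / ((\<nu> - slope_lo) * (\<nu> - slope_hi)))" by (simp only: r)
  also have "\<dots> = (2*pi) * (\<i> * X / of_real (pi^2 * ((\<nu> - slope_lo) * (\<nu> - slope_hi))))"
  proof -
    have gen2: "- \<i> * X * (-(2/P) / D) = (2*P) * (\<i> * X / (P^2 * D))" if "P \<noteq> 0" "D \<noteq> 0" for P D :: complex
      using that by (simp add: field_simps power2_eq_square)
    have "(of_real ((\<nu> - slope_lo) * (\<nu> - slope_hi)) :: complex) \<noteq> 0" using nz by simp
    from gen2[OF _ this, of "of_real pi"] show ?thesis by simp
  qed
  finally show ?thesis .
qed

context
  fixes \<nu> :: real and \<sigma> :: complex
  assumes s1: "exp (\<i> * of_real (-(\<nu>*pi))) = \<sigma>"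
begin

lemma exp_phase_has_integral_lo:
  assumes na: "\<nu> \<noteq> slope_lo"
  shows "((\<lambda>t. exp (\<i> * of_real (phase t - \<nu>*t))) has_integral
           ((- \<sigma> - exp \<i>) / (\<i> * of_real (slope_lo - \<nu>)))) {0..pi}"
proof -
  have p1: "((\<lambda>t. exp (\<i> * of_real (1 + (slope_lo - \<nu>)*t))) has_integral
     ((exp (\<i> * of_real (1 + (slope_lo - \<nu>)*pi)) - exp (\<i> * of_real (1 + (slope_lo - \<nu>)*0)))
        / (\<i> * of_real (slope_lo - \<nu>)))) {0..pi}"
    by (rule exp_i_affine_has_integral) (use na in auto)
  have e1: "exp (\<i> * of_real (1 + (slope_lo - \<nu>)*pi)) = - \<sigma>"
  proof -
    have "1 + (slope_lo - \<nu>)*pi = pi + (-(\<nu>*pi))" using slope_lo_hi(6) by (simp add: algebra_simps)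
    then show ?thesis using exp_i_add_pi[of "-(\<nu>*pi)"] s1 by simp
  qed
  have e0: "exp (\<i> * of_real (1 + (slope_lo - \<nu>)*0)) = exp \<i>" by simp
  show ?thesis
    using p1 unfolding e1 e0
    by (rule has_integral_eq[rotated]) (simp add: phase_le_pi algebra_simps)
qed

lemma exp_phase_has_integral_hi:
  assumes s2: "exp (\<i> * of_real (-(\<nu>*(2*pi)))) = 1" and nb: "\<nu> \<noteq> slope_hi"
  shows "((\<lambda>t. exp (\<i> * of_real (phase t - \<nu>*t))) has_integral
           ((exp \<i> - - \<sigma>) / (\<i> * of_real (slope_hi - \<nu>)))) {pi..2*pi}"
proof -
  have p2: "((\<lambda>t. exp (\<i> * of_real (-1 + (slope_hi - \<nu>)*t))) has_integral
     ((exp (\<i> * of_real (-1 + (slope_hi - \<nu>)*(2*pi))) - exp (\<i> * of_real (-1 + (slope_hi - \<nu>)*pi)))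
        / (\<i> * of_real (slope_hi - \<nu>)))) {pi..2*pi}"
    by (rule exp_i_affine_has_integral) (use nb in auto)
  have e2: "exp (\<i> * of_real (-1 + (slope_hi - \<nu>)*(2*pi))) = exp \<i>"
  proof -
    have r: "-1 + (slope_hi - \<nu>)*(2*pi) = (1 + (-(\<nu>*(2*pi)))) + 2*pi" using slope_lo_hi(7) by (simp add: algebra_simps)
    have "exp (\<i> * of_real (-1 + (slope_hi - \<nu>)*(2*pi))) = exp (\<i> * of_real (1 + (-(\<nu>*(2*pi)))))"
      unfolding r by (rule exp_i_add_2pi)
    also have "\<dots> = exp \<i> * exp (\<i> * of_real (-(\<nu>*(2*pi))))"
    proof -
      have "\<i> * of_real (1 + (-(\<nu>*(2*pi)))) = \<i> + \<i> * of_real (-(\<nu>*(2*pi)))"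
        by (simp only: of_real_add of_real_1 distrib_left mult_1_right)
      then show ?thesis by (simp only: exp_add)
    qed
    finally show ?thesis using s2 by simp
  qed
  have e3: "exp (\<i> * of_real (-1 + (slope_hi - \<nu>)*pi)) = - \<sigma>"
  proof -
    have "-1 + (slope_hi - \<nu>)*pi = pi + (-(\<nu>*pi))" using slope_lo_hi(7) by (simp add: algebra_simps)
    then show ?thesis using exp_i_add_pi[of "-(\<nu>*pi)"] s1 by simp
  qed
  show ?thesis
    using p2 unfolding e2 e3
    by (rule has_integral_eq[rotated]) (simp add: phase_ge_pi algebra_simps)
qed

lemma exp_phase_has_integral:
  assumes s2: "exp (\<i> * of_real (-(\<nu>*(2*pi)))) = 1"
    and na: "\<nu> \<noteq> slope_lo" and nb: "\<nu> \<noteq> slope_hi"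
  shows "((\<lambda>t. exp (\<i> * of_real (phase t - \<nu>*t))) has_integral
           (2*pi) * (\<i> * (exp \<i> + \<sigma>) / of_real (pi^2 * ((\<nu> - slope_lo) * (\<nu> - slope_hi))))) {0..2*pi}"
proof -
  have "((\<lambda>t. exp (\<i> * of_real (phase t - \<nu>*t))) has_integral
     ((- \<sigma> - exp \<i>) / (\<i> * of_real (slope_lo - \<nu>))
        + (exp \<i> - - \<sigma>) / (\<i> * of_real (slope_hi - \<nu>)))) {0..2*pi}"
    by (rule has_integral_combine[OF _ _ exp_phase_has_integral_lo[OF na] exp_phase_has_integral_hi[OF s2 nb]])
      auto
  moreover have "(- \<sigma> - exp \<i>) / (\<i> * of_real (slope_lo - \<nu>))
      + (exp \<i> - - \<sigma>) / (\<i> * of_real (slope_hi - \<nu>))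
     = (2*pi) * (\<i> * (exp \<i> + \<sigma>) / of_real (pi^2 * ((\<nu> - slope_lo) * (\<nu> - slope_hi))))"
    using exp_phase_integral_algebra[OF na nb, of "exp \<i> + \<sigma>"] by (simp add: algebra_simps)
  ultimately show ?thesis by simp
qed

end

lemma real_nat_ne_slope_lo: "real n \<noteq> slope_lo" and real_nat_ne_slope_hi: "real n \<noteq> slope_hi"
proof -
  have "n = 0 \<or> n = 1 \<or> n \<ge> 2" by arith
  then show "real n \<noteq> slope_lo" "real n \<noteq> slope_hi" using slope_lo_hi(1-4) by auto
qed

lemma fourier_coeff_boundary:
  "fourier_coeff boundary n
     = \<i> * (exp \<i> + (-1)^n) / of_real (pi^2 * ((real n - slope_lo) * (real n - slope_hi)))"
proof -
  have e: "exp (-(\<i> * of_real t)) ^ n * boundary t = exp (\<i> * of_real (phase t - real n * t))" for t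
  proof -
    have "exp (-(\<i> * of_real t)) ^ n * boundary t = exp (of_nat n * (-(\<i> * of_real t)) + \<i> * of_real (phase t))"
      unfolding boundary_def exp_add exp_of_nat_mult ..
    also have "of_nat n * (-(\<i> * of_real t)) + \<i> * of_real (phase t) = \<i> * of_real (phase t - real n * t)"
      by (simp add: algebra_simps)
    finally show ?thesis .
  qed
  have "((\<lambda>t. exp (-(\<i> * of_real t)) ^ n * boundary t) has_integral
     (2*pi) * (\<i> * (exp \<i> + (-1)^n) / of_real (pi^2 * ((real n - slope_lo) * (real n - slope_hi))))) {0..2*pi}"
    unfolding e by (rule exp_phase_has_integral[OF exp_i_nat_pi(2) exp_i_nat_pi(4) real_nat_ne_slope_lo real_nat_ne_slope_hi])
  then show ?thesis unfolding fourier_coeff_def by (simp add: integral_unique)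
qed

lemma fourier_coeff_neg_boundary:
  "fourier_coeff_neg boundary n
     = \<i> * (exp \<i> + (-1)^n) / of_real (pi^2 * ((real n + slope_lo) * (real n + slope_hi)))"
proof -
  have e: "exp (\<i> * of_real t) ^ n * boundary t = exp (\<i> * of_real (phase t - (- real n) * t))" for t
  proof -
    have "exp (\<i> * of_real t) ^ n * boundary t = exp (of_nat n * (\<i> * of_real t) + \<i> * of_real (phase t))"
      unfolding boundary_def exp_add exp_of_nat_mult ..
    also have "of_nat n * (\<i> * of_real t) + \<i> * of_real (phase t) = \<i> * of_real (phase t - (- real n) * t)"
      by (simp add: algebra_simps)
    finally show ?thesis .
  qed
  have s1: "exp (\<i> * of_real (-((- real n)*pi))) = (-1)^n" using exp_i_nat_pi(1) by simp
  have s2: "exp (\<i> * of_real (-((- real n)*(2*pi)))) = 1" using exp_i_nat_pi(3) by simp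
  have na: "- real n \<noteq> slope_lo" "- real n \<noteq> slope_hi" using slope_lo_hi(1,3) by (auto simp: not_less)
  have "((\<lambda>t. exp (\<i> * of_real t) ^ n * boundary t) has_integral
     (2*pi) * (\<i> * (exp \<i> + (-1)^n) / of_real (pi^2 * ((- real n - slope_lo) * (- real n - slope_hi))))) {0..2*pi}"
    unfolding e by (rule exp_phase_has_integral[OF s1 s2 na])
  moreover have "(- real n - slope_lo) * (- real n - slope_hi) = (real n + slope_lo) * (real n + slope_hi)"
    by (simp add: algebra_simps)
  ultimately show ?thesis unfolding fourier_coeff_neg_def by (simp add: integral_unique)
qed

section \<open>The Taylor weights\<close>

text \<open>Up to the factor \<open>\<plusminus>i (e\<^sup>\<plusminus>\<^sup>i - (-1)\<^sup>n) / \<pi>\<^sup>2\<close>, \<open>hweight (n + 1)\<close> and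
  \<open>gweight (n + 1)\<close> are the Taylor coefficients of \<open>h'\<close> and \<open>g'\<close>
  (lemmas \<open>diffs_hcoef\<close>, \<open>diffs_gcoef\<close>).\<close>

definition hweight :: "real \<Rightarrow> real" where "hweight m = m / ((m - slope_lo) * (m - slope_hi))"
definition gweight :: "real \<Rightarrow> real" where "gweight m = m / ((m + slope_lo) * (m + slope_hi))"

lemma weight_denominators:
  "(m - slope_lo) * (m - slope_hi) = m*m - 2*m + slope_lo * slope_hi"
  "(m + slope_lo) * (m + slope_hi) = m*m + 2*m + slope_lo * slope_hi"
proof -
  have "(m - slope_lo) * (m - slope_hi) = m*m - (slope_lo + slope_hi) * m + slope_lo * slope_hi"
       "(m + slope_lo) * (m + slope_hi) = m*m + (slope_lo + slope_hi) * m + slope_lo * slope_hi"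
    by (simp_all add: algebra_simps)
  then show "(m - slope_lo) * (m - slope_hi) = m*m - 2*m + slope_lo * slope_hi"
    "(m + slope_lo) * (m + slope_hi) = m*m + 2*m + slope_lo * slope_hi"
    unfolding slope_lo_hi(8) by simp_all
qed

lemma hweight_1: "hweight 1 = -(pi^2)"
  by (simp add: hweight_def slope_lo_def slope_hi_def field_simps power2_eq_square)

lemma hweight_denominator_ge: assumes "m \<ge> 2" shows "(m - slope_lo) * (m - slope_hi) \<ge> m*m/6"
proof -
  have a: "m - slope_lo \<ge> m/2" using assms slope_lo_hi(2) by simp
  have "1/pi < 1/3" using pi_gt3 by (simp add: field_simps)
  then have b: "m - slope_hi \<ge> m/3" using assms unfolding slope_hi_def by linarith
  have "m*m/6 = (m/2) * (m/3)" by simp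
  also have "\<dots> \<le> (m - slope_lo) * (m - slope_hi)" using a b assms by (intro mult_mono) auto
  finally show ?thesis .
qed

lemma hweight_bounds: assumes "m \<ge> 2" shows "1/m \<le> hweight m" "hweight m \<le> 6/m" "0 \<le> hweight m"
proof -
  have dp: "(m - slope_lo) * (m - slope_hi) > 0" using hweight_denominator_ge[OF assms] assms
    by (smt (verit) mult_pos_pos divide_pos_pos)
  have "(m - slope_lo) * (m - slope_hi) \<le> m * m" using assms slope_lo_hi(9) weight_denominators(1)[of m] by linarith
  then show "1/m \<le> hweight m" unfolding hweight_def using dp assms
    by (simp add: field_simps)
  show "hweight m \<le> 6/m" unfolding hweight_def using dp assms hweight_denominator_ge[OF assms]
    by (simp add: field_simps)
  show "0 \<le> hweight m" unfolding hweight_def using dp assms by simp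
qed

lemma hweight_decreasing: assumes "m \<ge> 2" shows "hweight (m+1) \<le> hweight m"
proof -
  have d0: "(m - slope_lo) * (m - slope_hi) > 0" using hweight_denominator_ge[OF assms] assms
    by (smt (verit) mult_pos_pos divide_pos_pos)
  have d1: "(m + 1 - slope_lo) * (m + 1 - slope_hi) > 0" using hweight_denominator_ge[of "m+1"] assms
    by (smt (verit) mult_pos_pos divide_pos_pos)
  have "(m+1) * ((m - slope_lo) * (m - slope_hi)) \<le> m * ((m + 1 - slope_lo) * (m + 1 - slope_hi))"
  proof -
    have "m * ((m + 1 - slope_lo) * (m + 1 - slope_hi)) - (m+1) * ((m - slope_lo) * (m - slope_hi)) = m*m + m - slope_lo * slope_hi"
      using slope_lo_hi(8) by (simp add: algebra_simps)
    moreover have "m*m \<ge> 0" by simp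
    ultimately show ?thesis using assms slope_lo_hi(9) by linarith
  qed
  then show ?thesis unfolding hweight_def using d0 d1 by (simp add: divide_simps mult.commute)
qed

lemma gweight_denominator_ge:
  assumes "m \<ge> 1" shows "(m + slope_lo) * (m + slope_hi) \<ge> m * m" "(m + slope_lo) * (m + slope_hi) > 0"
proof -
  show "(m + slope_lo) * (m + slope_hi) \<ge> m * m" using assms slope_lo_hi(1,3) by (intro mult_mono) auto
  then show "(m + slope_lo) * (m + slope_hi) > 0" using assms by (smt (verit) mult_pos_pos)
qed

lemma gweight_bounds: assumes "m \<ge> 1" shows "0 \<le> gweight m" "gweight m \<le> 1/m"
proof -
  show "0 \<le> gweight m" unfolding gweight_def using gweight_denominator_ge[OF assms] assms by simp
  show "gweight m \<le> 1/m" unfolding gweight_def using gweight_denominator_ge[OF assms] assms by (simp add: field_simps)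
qed

lemma gweight_decreasing: assumes "m \<ge> 1" shows "gweight (m+1) \<le> gweight m"
proof -
  have d0: "(m + slope_lo) * (m + slope_hi) > 0" using gweight_denominator_ge[OF assms] by simp
  have d1: "(m + 1 + slope_lo) * (m + 1 + slope_hi) > 0" using gweight_denominator_ge[of "m+1"] assms by simp
  have "(m+1) * ((m + slope_lo) * (m + slope_hi)) \<le> m * ((m + 1 + slope_lo) * (m + 1 + slope_hi))"
  proof -
    have "(m+1) * ((m + slope_lo) * (m + slope_hi)) - m * ((m + 1 + slope_lo) * (m + 1 + slope_hi)) = slope_lo * slope_hi - m*m - m"
      using slope_lo_hi(8) by (simp add: algebra_simps)
    moreover have "m*m \<ge> 1" using assms by (smt (verit) mult_le_cancel_left1)
    ultimately show ?thesis using assms slope_lo_hi(9) by linarith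
  qed
  then show ?thesis unfolding gweight_def using d0 d1 by (simp add: divide_simps mult.commute)
qed

lemma abs_hweight_minus_gweight_le: assumes "m \<ge> 2" shows "\<bar>hweight m - gweight m\<bar> \<le> 24 / (m*m)"
proof -
  have d1: "(m - slope_lo) * (m - slope_hi) \<ge> m*m/6" by (rule hweight_denominator_ge[OF assms])
  have d2: "(m + slope_lo) * (m + slope_hi) \<ge> m*m" using gweight_denominator_ge assms by simp
  have mm: "m*m > 0" using assms by simp
  have p1: "(m - slope_lo) * (m - slope_hi) > 0" using d1 mm by linarith
  have p2: "(m + slope_lo) * (m + slope_hi) > 0" using d2 mm by linarith
  have e: "hweight m - gweight m = 4*(m*m) / (((m - slope_lo) * (m - slope_hi)) * ((m + slope_lo) * (m + slope_hi)))"
  proof -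
    have "(m + slope_lo) * (m + slope_hi) - (m - slope_lo) * (m - slope_hi) = 4*m" using weight_denominators[of m] by simp
    moreover have "x/A - x/B = x*(B - A)/(A*B)" if "A > 0" "B > 0" for x A B :: real
      using that by (simp add: field_simps)
    ultimately show ?thesis unfolding hweight_def gweight_def using p1 p2 by simp
  qed
  have "4*(m*m) / (((m - slope_lo) * (m - slope_hi)) * ((m + slope_lo) * (m + slope_hi))) \<le> 4*(m*m) / ((m*m/6) * (m*m))"
  proof (rule divide_left_mono)
    show "(m*m/6) * (m*m) \<le> ((m - slope_lo) * (m - slope_hi)) * ((m + slope_lo) * (m + slope_hi))"
      by (rule mult_mono[OF d1 d2]) (use p1 mm in auto)
    show "0 \<le> 4*(m*m)" using mm by simp
    show "0 < (((m - slope_lo) * (m - slope_hi)) * ((m + slope_lo) * (m + slope_hi))) * ((m*m/6) * (m*m))"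
      using mm p1 p2 by simp
  qed
  also have "\<dots> = 24 / (m*m)" using mm by (simp add: field_simps)
  finally show ?thesis unfolding e using p1 p2 mm by simp
qed

definition hsum :: "real \<Rightarrow> real" where "hsum r = (\<Sum>n. hweight (real (Suc n)) * r^n)"
definition hsum_alt :: "real \<Rightarrow> real" where "hsum_alt r = (\<Sum>n. (-1)^n * hweight (real (Suc n)) * r^n)"
definition gsum :: "real \<Rightarrow> real" where "gsum r = (\<Sum>n. gweight (real (Suc n)) * r^n)"
definition gsum_alt :: "real \<Rightarrow> real" where "gsum_alt r = (\<Sum>n. (-1)^n * gweight (real (Suc n)) * r^n)"

lemma pi_squared_gt_9: "9 < pi^2"
proof -
  have "3*3 < pi*pi" using pi_gt3 by (intro mult_strict_mono) auto
  then show ?thesis by (simp add: power2_eq_square)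
qed

lemma abs_hweight_Suc_le: "\<bar>hweight (real (Suc n))\<bar> \<le> pi^2"
proof (cases n)
  case 0 then show ?thesis using hweight_1 by simp
next
  case (Suc k)
  then have m: "real (Suc n) \<ge> 2" by simp
  have "hweight (real (Suc n)) \<le> 6 / real (Suc n)" by (rule hweight_bounds(2)[OF m])
  also have "\<dots> \<le> 3" using m by (simp add: field_simps)
  finally show ?thesis using hweight_bounds(3)[OF m] pi_squared_gt_9 by simp
qed

lemma abs_gweight_Suc_le: "\<bar>gweight (real (Suc n))\<bar> \<le> 1"
proof -
  have m: "real (Suc n) \<ge> 1" by simp
  have "gweight (real (Suc n)) \<le> 1 / real (Suc n)" by (rule gweight_bounds(2)[OF m])
  also have "\<dots> \<le> 1" by simp
  finally show ?thesis using gweight_bounds(1)[OF m] by simp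
qed

context
  fixes r :: real assumes r: "0 \<le> r" "r < 1"
begin

lemma summable_hsum: "summable (\<lambda>n. hweight (real (Suc n)) * r^n)"
  and summable_hsum_alt: "summable (\<lambda>n. (-1)^n * hweight (real (Suc n)) * r^n)"
  and summable_gsum: "summable (\<lambda>n. gweight (real (Suc n)) * r^n)"
  and summable_gsum_alt: "summable (\<lambda>n. (-1)^n * gweight (real (Suc n)) * r^n)"
  using summable_bounded_powser[of "\<lambda>n. hweight (real (Suc n))" "pi^2" r]
    summable_bounded_powser[of "\<lambda>n. (-1)^n * hweight (real (Suc n))" "pi^2" r]
    summable_bounded_powser[of "\<lambda>n. gweight (real (Suc n))" 1 r]
    summable_bounded_powser[of "\<lambda>n. (-1)^n * gweight (real (Suc n))" 1 r]
    abs_hweight_Suc_le abs_gweight_Suc_le r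
  by (simp_all add: abs_mult)

end

lemma alternating_powser_bounds:
  fixes c :: "nat \<Rightarrow> real"
  assumes pos: "\<And>n. 0 \<le> c n" and mono: "\<And>n. c (Suc n) \<le> c n" and r: "0 \<le> r" "r < 1"
  shows "0 \<le> (\<Sum>n. (-1)^n * c n * r^n)" "(\<Sum>n. (-1)^n * c n * r^n) \<le> c 0"
proof -
  define d where "d n = c n * r^n" for n
  have "c n \<le> c 0" for n using lift_Suc_antimono_le[of c 0 n] mono by simp
  then have "summable d"
    unfolding d_def using summable_bounded_powser[of c "c 0" r] pos r by simp
  then have d0: "d \<longlonglongrightarrow> 0" by (rule summable_LIMSEQ_zero)
  have dpos: "0 \<le> d n" for n unfolding d_def using pos r by simp
  have dmono: "d (Suc n) \<le> d n" for n
    unfolding d_def using mono pos r power_decreasing[of n "Suc n" r] by (auto intro!: mult_mono)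
  have "(\<lambda>n. (-1)^n * c n * r^n) = (\<lambda>n. (-1)^n * d n)" by (simp add: d_def mult.assoc)
  then show "0 \<le> (\<Sum>n. (-1)^n * c n * r^n)" "(\<Sum>n. (-1)^n * c n * r^n) \<le> c 0"
    using summable_Leibniz'(2)[OF d0 dpos dmono, of 0] summable_Leibniz'(4)[OF d0 dpos dmono, of 0]
    by (simp_all add: d_def)
qed

text \<open>The first weight \<open>hweight 1 = -\<pi>\<^sup>2\<close> is negative; the weights decrease only
  from \<open>n = 2\<close> on.\<close>

lemma abs_hsum_alt_le: assumes r: "0 \<le> r" "r < 1" shows "\<bar>hsum_alt r\<bar> \<le> pi^2 + 3"
proof -
  define A where "A = (\<Sum>n. (-1)^n * hweight (real (Suc (Suc n))) * r^n)"
  have m2: "real (Suc (Suc n)) \<ge> 2" for n by simp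
  have A: "0 \<le> A" "A \<le> hweight 2"
    unfolding A_def using alternating_powser_bounds[OF _ _ r, of "\<lambda>n. hweight (real (Suc (Suc n)))"]
      hweight_bounds(3)[OF m2] hweight_decreasing[OF m2] by (simp_all add: add.commute)
  have "summable (\<lambda>n. (-1)^n * hweight (real (Suc (Suc n))) * r^n)"
    using summable_bounded_powser[of "\<lambda>n. (-1)^n * hweight (real (Suc (Suc n)))" "pi^2" r]
      abs_hweight_Suc_le[of "Suc n" for n] r by (simp add: abs_mult)
  then have "(\<Sum>n. (-1)^(Suc n) * hweight (real (Suc (Suc n))) * r^(Suc n)) = - r * A"
    unfolding A_def using suminf_mult[of _ "- r"] by (simp add: mult_ac)
  then have "hsum_alt r = - (pi^2) - r * A"
    using suminf_split_head[OF summable_hsum_alt[OF r]] hweight_1 unfolding hsum_alt_def by simp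
  moreover have "r * A \<le> 3"
    using A r hweight_bounds(2)[of 2] mult_mono[of r 1 A 3] by simp
  ultimately show ?thesis using A r pi_squared_gt_9 by (simp add: abs_le_iff) (smt (verit) mult_nonneg_nonneg)
qed

lemma abs_gsum_alt_le: assumes r: "0 \<le> r" "r < 1" shows "\<bar>gsum_alt r\<bar> \<le> 1"
proof -
  have m1: "real (Suc n) \<ge> 1" for n by simp
  show ?thesis
    unfolding gsum_alt_def using alternating_powser_bounds[OF _ _ r, of "\<lambda>n. gweight (real (Suc n))"]
      gweight_bounds[OF m1] gweight_decreasing[OF m1] gweight_bounds(2)[of 1] by (simp add: add.commute abs_le_iff)
qed

definition weight_gap :: real where "weight_gap = (\<Sum>n. \<bar>hweight (real (Suc n)) - gweight (real (Suc n))\<bar>)"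

lemma summable_weight_gap: "summable (\<lambda>n. \<bar>hweight (real (Suc n)) - gweight (real (Suc n))\<bar>)"
proof (rule summable_comparison_test[where g="\<lambda>n. 24 * inverse (real (Suc n) ^ 2)"])
  show "\<exists>N. \<forall>n\<ge>N. norm \<bar>hweight (real (Suc n)) - gweight (real (Suc n))\<bar>
                     \<le> 24 * inverse (real (Suc n) ^ 2)"
  proof (intro exI allI impI)
    fix n :: nat assume "n \<ge> 1"
    then have m: "real (Suc n) \<ge> 2" by simp
    show "norm \<bar>hweight (real (Suc n)) - gweight (real (Suc n))\<bar> \<le> 24 * inverse (real (Suc n) ^ 2)"
      using abs_hweight_minus_gweight_le[OF m] by (simp add: power2_eq_square divide_inverse)
  qed
  have "summable (\<lambda>n. inverse (real n ^ 2))" by (rule inverse_power_summable) simp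
  then have "summable (\<lambda>n. inverse (real (Suc n) ^ 2))" by (subst summable_Suc_iff)
  then show "summable (\<lambda>n. 24 * inverse (real (Suc n) ^ 2))" by (rule summable_mult)
qed

lemma abs_hsum_minus_gsum_le: assumes r: "0 \<le> r" "r < 1" shows "\<bar>hsum r - gsum r\<bar> \<le> weight_gap"
proof -
  define x where "x n = (hweight (real (Suc n)) - gweight (real (Suc n))) * r^n" for n
  have "hsum r - gsum r = (\<Sum>n. x n)" unfolding hsum_def gsum_def x_def
    using suminf_diff[OF summable_hsum[OF r] summable_gsum[OF r]] by (simp add: left_diff_distrib)
  moreover have sx: "summable (\<lambda>n. \<bar>x n\<bar>)"
  proof (rule summable_comparison_test[OF _ summable_weight_gap])
    show "\<exists>N. \<forall>n\<ge>N. norm \<bar>x n\<bar> \<le> \<bar>hweight (real (Suc n)) - gweight (real (Suc n))\<bar>"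
      unfolding x_def using r by (auto simp: abs_mult intro!: mult_left_le power_le_one)
  qed
  moreover have "(\<Sum>n. \<bar>x n\<bar>) \<le> weight_gap" unfolding weight_gap_def
    by (rule suminf_le[OF _ sx summable_weight_gap])
      (unfold x_def, use r in \<open>auto simp: abs_mult intro!: mult_left_le power_le_one\<close>)
  ultimately show ?thesis using summable_rabs[OF sx] by linarith
qed

lemma hsum_ge_harm: assumes r: "0 \<le> r" "r < 1" shows "hsum r \<ge> - (pi^2) + r^K * (harm (Suc K) - 1)"
proof -
  define f where "f n = hweight (real (Suc n)) * r^n" for n
  have "sum f {..<Suc K} \<le> hsum r" unfolding hsum_def f_def[symmetric]
  proof (rule sum_le_suminf)
    show "summable f" unfolding f_def by (rule summable_hsum[OF r])
    show "finite {..<Suc K}" by simp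
    fix n assume "n \<in> - {..<Suc K}"
    then have "real (Suc n) \<ge> 2" by simp
    then show "0 \<le> f n" unfolding f_def using hweight_bounds(3) r by simp
  qed
  moreover have "sum f {..<Suc K} = f 0 + (\<Sum>n<K. f (Suc n))" by (rule sum.lessThan_Suc_shift)
  moreover have "f 0 = - (pi^2)" unfolding f_def using hweight_1 by simp
  moreover have "(\<Sum>n<K. f (Suc n)) \<ge> (\<Sum>n<K. r^K * inverse (real (Suc (Suc n))))"
  proof (rule sum_mono)
    fix n assume "n \<in> {..<K}"
    then have nk: "Suc n \<le> K" by simp
    have m: "real (Suc (Suc n)) \<ge> 2" by simp
    have "r^K \<le> r^(Suc n)" using r nk by (intro power_decreasing) auto
    moreover have "inverse (real (Suc (Suc n))) \<le> hweight (real (Suc (Suc n)))"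
      using hweight_bounds(1)[OF m] by (simp add: divide_inverse)
    ultimately show "r^K * inverse (real (Suc (Suc n))) \<le> f (Suc n)"
      unfolding f_def using r by (subst mult.commute) (intro mult_mono, auto)
  qed
  moreover have "(\<Sum>n<K. r^K * inverse (real (Suc (Suc n)))) = r^K * (harm (Suc K) - 1)"
  proof -
    have "harm (Suc K) = (\<Sum>k<Suc K. inverse (real (Suc k)) :: real)" by (rule harm_altdef)
    also have "\<dots> = 1 + (\<Sum>k<K. inverse (real (Suc (Suc k))))" by (subst sum.lessThan_Suc_shift) simp
    finally show ?thesis by (simp add: sum_distrib_left)
  qed
  ultimately show ?thesis by linarith
qed

section \<open>The analytic and co-analytic parts of \<open>w\<close>\<close>

definition hcoef :: "nat \<Rightarrow> complex" where "hcoef n = fourier_coeff boundary n"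
definition gcoef :: "nat \<Rightarrow> complex" where "gcoef n = (if n = 0 then 0 else cnj (fourier_coeff_neg boundary n))"
definition hpart :: "complex \<Rightarrow> complex" where "hpart z = (\<Sum>n. hcoef n * z^n)"
definition gpart :: "complex \<Rightarrow> complex" where "gpart z = (\<Sum>n. gcoef n * z^n)"

lemma norm_hcoef_le: "norm (hcoef n) \<le> 1"
  unfolding hcoef_def by (rule norm_fourier_coeff_le(1)[OF continuous_on_boundary]) (simp add: norm_boundary)
lemma norm_gcoef_le: "norm (gcoef n) \<le> 1"
  unfolding gcoef_def using norm_fourier_coeff_le(2)[OF continuous_on_boundary, of n] by (simp add: norm_boundary)

lemma
  fixes c :: "nat \<Rightarrow> complex"
  assumes c: "\<And>n. norm (c n) \<le> C"
  shows holomorphic_bounded_powser: "(\<lambda>z. \<Sum>n. c n * z^n) holomorphic_on ball 0 1"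
    and deriv_bounded_powser:
      "z \<in> ball 0 1 \<Longrightarrow> deriv (\<lambda>z. \<Sum>n. c n * z^n) z = (\<Sum>n. diffs c n * z^n)"
proof -
  have d: "((\<lambda>z. \<Sum>n. c n * z^n) has_field_derivative (\<Sum>n. diffs c n * z^n)) (at z)"
    if "z \<in> ball 0 1" for z
    by (rule termdiffs_strong'[where K=1]) (use that in \<open>auto intro: summable_bounded_powser[OF c]\<close>)
  then show "(\<lambda>z. \<Sum>n. c n * z^n) holomorphic_on ball 0 1"
    by (subst holomorphic_on_open[OF open_ball]) blast
  show "z \<in> ball 0 1 \<Longrightarrow> deriv (\<lambda>z. \<Sum>n. c n * z^n) z = (\<Sum>n. diffs c n * z^n)"
    by (rule DERIV_imp_deriv[OF d])
qed

lemma holomorphic_hpart: "hpart holomorphic_on ball 0 1"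
  using holomorphic_bounded_powser[OF norm_hcoef_le] unfolding hpart_def[abs_def] .
lemma holomorphic_gpart: "gpart holomorphic_on ball 0 1"
  using holomorphic_bounded_powser[OF norm_gcoef_le] unfolding gpart_def[abs_def] .
lemma deriv_hpart: "z \<in> ball 0 1 \<Longrightarrow> deriv hpart z = (\<Sum>n. diffs hcoef n * z^n)"
  using deriv_bounded_powser[OF norm_hcoef_le] unfolding hpart_def[abs_def] .
lemma deriv_gpart: "z \<in> ball 0 1 \<Longrightarrow> deriv gpart z = (\<Sum>n. diffs gcoef n * z^n)"
  using deriv_bounded_powser[OF norm_gcoef_le] unfolding gpart_def[abs_def] .

lemma poisson_integral_Fb_eq: assumes z: "z \<in> ball 0 1" shows "poisson_integral Fb z = hpart z + cnj (gpart z)"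
proof -
  have nz: "norm z < 1" using z by simp
  have "poisson_integral Fb z = integral {0..2*pi} (\<lambda>t. of_real (poisson_kernel (cmod z) (t - Arg z)) * boundary t)"
    unfolding poisson_integral_def by (rule integral_cong) (simp add: Fb_eq_boundary)
  also have "\<dots> = (\<Sum>n. fourier_coeff boundary n * z^n) + (\<Sum>n. fourier_coeff_neg boundary (Suc n) * cnj z ^ Suc n)"
    by (rule poisson_integral_fourier_series[OF continuous_on_boundary _ nz]) (simp add: norm_boundary)
  also have "(\<Sum>n. fourier_coeff_neg boundary (Suc n) * cnj z ^ Suc n) = cnj (gpart z)"
  proof -
    have sg: "summable (\<lambda>n. gcoef n * z^n)" by (rule summable_bounded_powser[OF norm_gcoef_le nz])
    have "(\<lambda>n. gcoef n * z^n) sums gpart z" unfolding gpart_def by (rule summable_sums[OF sg])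
    then have "(\<lambda>n. cnj (gcoef n * z^n)) sums cnj (gpart z)" by (subst sums_cnj)
    then have s1: "summable (\<lambda>n. cnj (gcoef n * z^n))" "cnj (gpart z) = (\<Sum>n. cnj (gcoef n * z^n))"
      by (auto simp: sums_iff)
    have "(\<Sum>n. cnj (gcoef (Suc n) * z^(Suc n))) = (\<Sum>n. cnj (gcoef n * z^n)) - cnj (gcoef 0 * z^0)"
      by (rule suminf_split_head[OF s1(1)])
    also have "\<dots> = cnj (gpart z)" using s1(2) by (simp add: gcoef_def)
    finally show ?thesis by (simp add: gcoef_def)
  qed
  finally show ?thesis unfolding hpart_def hcoef_def by simp
qed

lemma suminf_complex_combination:
  fixes a b :: "nat \<Rightarrow> real" and c e :: complex
  assumes "summable a" "summable b"
  shows "(\<Sum>n. c * (e * of_real (a n) - of_real (b n))) = c * (e * of_real (suminf a) - of_real (suminf b))"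
proof -
  have sa: "summable (\<lambda>n. e * of_real (a n))" using summable_mult[OF summable_of_real[OF assms(1)], of e] .
  have sb: "summable (\<lambda>n. (of_real (b n) :: complex))" using summable_of_real[OF assms(2)] .
  have "(\<Sum>n. c * (e * of_real (a n) - of_real (b n))) = c * (\<Sum>n. e * of_real (a n) - of_real (b n))"
    by (rule suminf_mult[OF summable_diff[OF sa sb]])
  also have "(\<Sum>n. e * of_real (a n) - of_real (b n)) = (\<Sum>n. e * of_real (a n)) - (\<Sum>n. of_real (b n))"
    by (rule suminf_diff[OF sa sb, symmetric])
  also have "(\<Sum>n. e * of_real (a n)) = e * (\<Sum>n. of_real (a n))" by (rule suminf_mult[OF summable_of_real[OF assms(1)]])
  also have "(\<Sum>n. (of_real (a n) :: complex)) = of_real (suminf a)" by (rule suminf_of_real[OF assms(1), symmetric])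
  also have "(\<Sum>n. (of_real (b n) :: complex)) = of_real (suminf b)" by (rule suminf_of_real[OF assms(2), symmetric])
  finally show ?thesis .
qed

lemma diffs_hcoef:
  "diffs hcoef n = \<i> / of_real (pi^2) * (exp \<i> - (-1)^n) * of_real (hweight (real (Suc n)))"
proof -
  have "(real (Suc n) - slope_lo) * (real (Suc n) - slope_hi) \<noteq> 0"
    by (metis real_nat_ne_slope_lo real_nat_ne_slope_hi mult_eq_0_iff right_minus_eq)
  then show ?thesis
    by (simp add: diffs_def hcoef_def fourier_coeff_boundary hweight_def field_simps)
qed

lemma diffs_gcoef:
  "diffs gcoef n = - \<i> / of_real (pi^2) * (cnj (exp \<i>) - (-1)^n) * of_real (gweight (real (Suc n)))"
proof -
  have "real (Suc n) \<ge> 1" by simp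
  from gweight_denominator_ge(2)[OF this]
  have "(real (Suc n) + slope_lo) * (real (Suc n) + slope_hi) \<noteq> 0" by (metis less_irrefl)
  then have "diffs gcoef n = \<i> / of_real (pi^2) * ((-1)^n - cnj (exp \<i>)) * of_real (gweight (real (Suc n)))"
    by (simp add: diffs_def gcoef_def fourier_coeff_neg_boundary gweight_def field_simps)
  then show ?thesis by (metis minus_diff_eq minus_divide_left mult_minus_left mult_minus_right)
qed

context
  fixes r :: real assumes r: "0 \<le> r" "r < 1"
begin

lemma deriv_hpart_real:
  "deriv hpart (of_real r) = \<i> / of_real (pi^2) * (exp \<i> * of_real (hsum r) - of_real (hsum_alt r))"
proof -
  have "deriv hpart (of_real r) = (\<Sum>n. diffs hcoef n * of_real r ^ n)"
    by (rule deriv_hpart) (use r in simp)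
  also have "\<dots> = (\<Sum>n. \<i> / of_real (pi^2) * (exp \<i> * of_real (hweight (real (Suc n)) * r^n)
                                    - of_real ((-1)^n * hweight (real (Suc n)) * r^n)))"
    by (intro arg_cong[where f=suminf] ext) (simp add: diffs_hcoef field_simps)
  also have "\<dots> = \<i> / of_real (pi^2) * (exp \<i> * of_real (hsum r) - of_real (hsum_alt r))"
    unfolding hsum_def hsum_alt_def
    by (rule suminf_complex_combination[OF summable_hsum[OF r] summable_hsum_alt[OF r]])
  finally show ?thesis .
qed

lemma deriv_gpart_real:
  "deriv gpart (of_real r) = - \<i> / of_real (pi^2) * (cnj (exp \<i>) * of_real (gsum r) - of_real (gsum_alt r))"
proof -
  have "deriv gpart (of_real r) = (\<Sum>n. diffs gcoef n * of_real r ^ n)"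
    by (rule deriv_gpart) (use r in simp)
  also have "\<dots> = (\<Sum>n. - \<i> / of_real (pi^2) * (cnj (exp \<i>) * of_real (gweight (real (Suc n)) * r^n)
                                    - of_real ((-1)^n * gweight (real (Suc n)) * r^n)))"
    by (intro arg_cong[where f=suminf] ext) (simp add: diffs_gcoef field_simps)
  also have "\<dots> = - \<i> / of_real (pi^2) * (cnj (exp \<i>) * of_real (gsum r) - of_real (gsum_alt r))"
    unfolding gsum_def gsum_alt_def
    by (rule suminf_complex_combination[OF summable_gsum[OF r] summable_gsum_alt[OF r]])
  finally show ?thesis .
qed

end

section \<open>Growth of \<open>h\<acute>\<close> along the radius\<close>

context
  fixes r :: real assumes r: "0 \<le> r" "r < 1"
begin

lemma norm_deriv_hpart_real:
  "norm (deriv hpart (of_real r)) = norm (exp \<i> * of_real (hsum r) - of_real (hsum_alt r)) / pi^2"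
  unfolding deriv_hpart_real[OF r] by (simp add: norm_mult norm_divide norm_power)

lemma norm_deriv_gpart_real:
  "norm (deriv gpart (of_real r)) = norm (exp \<i> * of_real (gsum r) - of_real (gsum_alt r)) / pi^2"
proof -
  have "cnj (exp \<i>) * of_real (gsum r) - of_real (gsum_alt r)
          = cnj (exp \<i> * of_real (gsum r) - of_real (gsum_alt r))" by simp
  then show ?thesis
    unfolding deriv_gpart_real[OF r] by (simp only: norm_mult norm_divide norm_power complex_mod_cnj)
      (simp add: norm_power)
qed

lemma norm_deriv_hpart_ge: "norm (deriv hpart (of_real r)) \<ge> (hsum r - \<bar>hsum_alt r\<bar>) / pi^2"
proof -
  have "hsum r - \<bar>hsum_alt r\<bar> \<le> norm (exp \<i> * of_real (hsum r)) - norm (of_real (hsum_alt r) :: complex)"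
    by (simp add: norm_mult)
  also have "\<dots> \<le> norm (exp \<i> * of_real (hsum r) - of_real (hsum_alt r))"
    by (rule norm_triangle_ineq2)
  finally show ?thesis unfolding norm_deriv_hpart_real by (intro divide_right_mono) auto
qed

lemma norm_deriv_hpart_minus_gpart_le:
  "norm (deriv hpart (of_real r)) - norm (deriv gpart (of_real r)) \<le> (weight_gap + pi^2 + 4) / pi^2"
proof -
  let ?X = "exp \<i> * of_real (hsum r) - of_real (hsum_alt r) :: complex"
  let ?Y = "exp \<i> * of_real (gsum r) - of_real (gsum_alt r) :: complex"
  have "norm ?X - norm ?Y \<le> norm (?X - ?Y)" by (rule norm_triangle_ineq2)
  also have "?X - ?Y = exp \<i> * of_real (hsum r - gsum r) - of_real (hsum_alt r) + of_real (gsum_alt r)"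
    by (simp add: algebra_simps)
  also have "norm \<dots> \<le> norm (exp \<i> * of_real (hsum r - gsum r)) + norm (of_real (hsum_alt r) :: complex)
                       + norm (of_real (gsum_alt r) :: complex)"
    by (intro norm_triangle_le add_right_mono norm_triangle_ineq4)
  also have "\<dots> = \<bar>hsum r - gsum r\<bar> + \<bar>hsum_alt r\<bar> + \<bar>gsum_alt r\<bar>"
    by (simp add: norm_mult del: of_real_diff)
  also have "\<dots> \<le> weight_gap + pi^2 + 4"
    using abs_hsum_minus_gsum_le[OF r] abs_hsum_alt_le[OF r] abs_gsum_alt_le[OF r] by linarith
  finally show ?thesis unfolding norm_deriv_hpart_real norm_deriv_gpart_real
    by (simp add: diff_divide_distrib[symmetric] divide_right_mono)
qed

end

lemma hsum_unbounded: "\<exists>r. 0 \<le> r \<and> r < 1 \<and> hsum r > B"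
proof -
  define X where "X = 2 * B + 2 * pi^2 + 4"
  have "eventually (\<lambda>n. harm n \<ge> X) sequentially"
    using harm_at_top by (simp add: filterlim_at_top)
  then obtain N where N: "\<And>n. n \<ge> N \<Longrightarrow> harm n \<ge> X" by (auto simp: eventually_sequentially)
  define K where "K = Suc N"
  have K: "K \<ge> 1" "harm (Suc K) \<ge> X" using N unfolding K_def by simp_all
  define r where "r = 1 - 1 / (2 * real K)"
  have r: "0 \<le> r" "r < 1" unfolding r_def using K by (auto simp: field_simps)
  have "1 + real K * (- 1 / (2 * real K)) \<le> (1 + (- 1 / (2 * real K)))^K"
    by (rule Bernoulli_inequality) (use K in \<open>simp add: field_simps\<close>)
  then have rK: "r^K \<ge> 1/2" unfolding r_def using K by (simp add: field_simps)
  have "(harm (Suc K) :: real) - 1 \<ge> 0" using harm_mono[of 1 "Suc K"] by (simp add: harm_expand)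
  then have "r^K * (harm (Suc K) - 1) \<ge> 1/2 * (harm (Suc K) - 1)"
    using rK by (intro mult_right_mono) auto
  moreover have "(X - 1) / 2 \<le> 1/2 * (harm (Suc K) - 1)" using K by simp
  ultimately have "hsum r \<ge> - (pi^2) + (X - 1) / 2" using hsum_ge_harm[OF r, of K] by linarith
  then have "hsum r > B" unfolding X_def by (simp add: field_simps)
  then show ?thesis using r by blast
qed

lemma deriv_hpart_unbounded: "\<exists>r. 0 \<le> r \<and> r < 1 \<and> norm (deriv hpart (of_real r)) > M"
proof -
  obtain r where r: "0 \<le> r" "r < 1" and "hsum r > M * pi^2 + pi^2 + 3"
    using hsum_unbounded by blast
  then have "hsum r - \<bar>hsum_alt r\<bar> > M * pi^2" using abs_hsum_alt_le[OF r] by linarith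
  then have "M < (hsum r - \<bar>hsum_alt r\<bar>) / pi^2" by (simp add: field_simps)
  then show ?thesis using norm_deriv_hpart_ge[OF r] r by (intro exI[of _ r]) auto
qed

lemma harmonic_on_poisson_integral_Fb: "harmonic_on (ball 0 1) (poisson_integral Fb)"
  by (rule harmonic_on_holomorphic_add_cnj[OF open_ball holomorphic_hpart holomorphic_gpart
        poisson_integral_Fb_eq])

lemma
  assumes z: "z \<in> ball 0 1"
  shows dz_poisson_integral_Fb: "dz (poisson_integral Fb) z = deriv hpart z"
    and dzbar_poisson_integral_Fb: "dzbar (poisson_integral Fb) z = cnj (deriv gpart z)"
proof -
  have x: "dx (poisson_integral Fb) z = deriv hpart z + cnj (deriv gpart z)"
   and y: "dy (poisson_integral Fb) z = \<i> * deriv hpart z + cnj (\<i> * deriv gpart z)"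
    using dx_dy_holomorphic_add_cnj[OF open_ball holomorphic_hpart holomorphic_gpart poisson_integral_Fb_eq z]
    by auto
  show "dz (poisson_integral Fb) z = deriv hpart z" unfolding dz_def x y by (simp add: algebra_simps)
  show "dzbar (poisson_integral Fb) z = cnj (deriv gpart z)" unfolding dzbar_def x y by (simp add: algebra_simps)
qed

lemma poisson_integral_Fb_in_ball:
  assumes z: "z \<in> ball 0 1" shows "poisson_integral Fb z \<in> ball 0 1"
proof -
  have nz: "\<bar>cmod z\<bar> < 1" using z by simp
  have "boundary 0 \<noteq> boundary pi"
  proof
    assume "boundary 0 = boundary pi"
    then have "cos (1::real) = -1" using Re_exp[of \<i>] by (simp add: boundary_0 boundary_pi)
    moreover have "cos (1::real) > 0" using pi_gt3 by (intro cos_gt_zero) auto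
    ultimately show False by simp
  qed
  moreover have "poisson_integral Fb z
      = integral {0..2*pi} (\<lambda>t. of_real (poisson_kernel (cmod z) (t - Arg z)) * boundary t)"
    unfolding poisson_integral_def by (rule integral_cong) (simp add: Fb_eq_boundary)
  ultimately show ?thesis
    using norm_weighted_average_less_1[OF continuous_on_poisson_kernel[OF nz] poisson_kernel_pos[OF nz]
        poisson_kernel_has_integral continuous_on_boundary, of 0 pi] z
    by simp
qed

lemma le_of_quasiregular_ineq:
  fixes A B K C :: real
  assumes "0 \<le> A" "0 \<le> B" "1 \<le> K" "(A + B)^2 \<le> K * (A^2 - B^2)" "A - B \<le> C"
  shows "A \<le> K * C"
proof (cases "A + B = 0")
  case False
  then have p: "A + B > 0" using assms(1,2) by simp
  have "(A + B) * (A + B) \<le> (A + B) * (K * (A - B))"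
    using assms(4) by (simp add: power2_eq_square algebra_simps)
  then have "A + B \<le> K * (A - B)" using p by simp
  also have "\<dots> \<le> K * C" using assms(3,5) by simp
  finally show ?thesis using assms(2) by simp
qed (use assms in \<open>simp add: add_nonneg_eq_0_iff\<close>)

lemma not_quasiregular_poisson_integral_Fb: "\<not> quasiregular_on (ball 0 1) (poisson_integral Fb)"
proof
  assume "quasiregular_on (ball 0 1) (poisson_integral Fb)"
  then obtain K where K: "K \<ge> 1" and q: "\<And>z. z \<in> ball 0 1 \<Longrightarrow>
     (cmod (deriv hpart z) + cmod (deriv gpart z))^2 \<le> K * ((cmod (deriv hpart z))^2 - (cmod (deriv gpart z))^2)"
    unfolding quasiregular_on_def by (auto simp: dz_poisson_integral_Fb dzbar_poisson_integral_Fb)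
  define C where "C = (weight_gap + pi^2 + 4) / pi^2"
  obtain r where r: "0 \<le> r" "r < 1" and big: "norm (deriv hpart (of_real r)) > K * C"
    using deriv_hpart_unbounded[of "K * C"] by blast
  have "norm (deriv hpart (of_real r)) \<le> K * C"
    using le_of_quasiregular_ineq[OF norm_ge_zero norm_ge_zero K q norm_deriv_hpart_minus_gpart_le[OF r]] r
    unfolding C_def by simp
  then show False using big by simp
qed

lemma dz_poisson_integral_Fb_not_in_Linf: "\<not> in_Linf (ball 0 1) (dz (poisson_integral Fb))"
proof
  assume "in_Linf (ball 0 1) (dz (poisson_integral Fb))"
  then obtain M where "AE x in lebesgue_on (ball 0 1). norm (dz (poisson_integral Fb) x) \<le> M"
    unfolding in_Linf_def by blast
  then have ae: "AE x in lebesgue_on (ball 0 1). norm (deriv hpart x) \<le> M"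
    by (rule lebesgue_on_mono) (simp add: dz_poisson_integral_Fb)
  obtain r where r: "0 \<le> r" "r < 1" and big: "norm (deriv hpart (of_real r)) > M"
    using deriv_hpart_unbounded[of M] by blast
  have "continuous_on (ball 0 1) (deriv hpart)"
    by (rule holomorphic_on_imp_continuous_on[OF holomorphic_deriv[OF holomorphic_hpart open_ball]])
  then have "norm (deriv hpart (of_real r)) \<le> M"
    by (rule continuous_AE_bound_imp_bound[OF open_ball _ ae]) (use r in simp)
  then show False using big by simp
qed

theorem mainTheorem8:
  shows "(abs_continuous_on {0..2*pi} (\<lambda>t. Fb (exp (\<i> * complex_of_real t))) \<and>
          (\<exists>Fdot. (AE t in lebesgue_on {0<..<2*pi}.
                     ((\<lambda>s. Fb (exp (\<i> * complex_of_real s))) has_vector_derivative Fdot t) (at t))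
                 \<and> in_Linf {0<..<2*pi} Fdot))
       \<and> (harmonic_on (ball 0 1) (poisson_integral Fb)
          \<and> (poisson_integral Fb) ` ball 0 1 \<subseteq> ball 0 1
          \<and> \<not> quasiregular_on (ball 0 1) (poisson_integral Fb))
       \<and> \<not> in_Linf (ball 0 1) (dz (poisson_integral Fb))"
  using abs_continuous_on_Fb Fb_derivative_in_Linf harmonic_on_poisson_integral_Fb
    poisson_integral_Fb_in_ball not_quasiregular_poisson_integral_Fb dz_poisson_integral_Fb_not_in_Linf
  by blast
end
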